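(* Let $c\ge 2$, let $\mathbf u_1,\dots,\mathbf u_c\in\mathbb R^2$, let $(\mathbf A_\star,\mathbf b_\star)\in \mathrm{GL}(2)\times\mathbb R^2$, and set $\mathbf v_i=\mathbf A_\star\mathbf u_i+\mathbf b_\star$ for $i=1,\dots,c$. Consider the target and observed $c$-channel signals $$\mathbf X_o=\sum_{i=1}^c \delta_{\mathbf v_i}\otimes\mathbf e_i,\qquad \mathbf X=\sum_{i=1}^c \delta_{\mathbf u_i}\otimes \mathbf e_i .$$ Let $\sigma>0$, $\sigma_0\ge 0$, and define $$\varphi_{L^2,\sigma}(\mathbf A,\mathbf b)=\frac{1}{2c}\Big\|\mathbf g_{\mathbf 0,\sigma^2\mathbf I-\sigma_0^2(\mathbf A^*\mathbf A)^{-1}}\ast\Big(\det{}^{1/2}(\mathbf A^*\mathbf A)\,(\mathbf g_{\mathbf 0,\sigma_0^2\mathbf I}\ast\mathbf X)\circ\tau_{\mathbf A,\mathbf b}\Big)-\mathbf g_{\mathbf 0,\sigma^2\mathbf I}\ast\mathbf X_o\Big\|_{L^2}^2$$ and its inverse parameterization $\varphi^{\mathrm{inv}}_{L^2,\sigma}(\mathbf A,\mathbf b)=\varphi_{L^2,\sigma}(\mathbf A^{-1},-\mathbf A^{-1}\mathbf b)$, where we assume $\sigma_0$ is such that the covariance $\sigma^2\mathbf I-\sigma_0^2\mathbf A\mathbf A^*$ appearing in $\varphi^{\mathrm{inv}}_{L^2,\sigma}(\mathbf A,\mathbf b)$ is positive semidefinite at every point $(\mathbf A,\mathbf b)$ at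 which the objective is evaluated below. Let $\mathbf U=[\mathbf u_1,\dots,\mathbf u_c]\in\mathbb R^{2\times c}$ and assume $\mathbf U\mathbf 1=\mathbf 0$ and $\operatorname{rank}(\mathbf U)=2$. Let $s_{\min}(\mathbf U),s_{\max}(\mathbf U)$ be the smallest and largest singular values of $\mathbf U$ and $\kappa=s_{\max}(\mathbf U)^2/s_{\min}(\mathbf U)^2$. Suppose $$\sigma^2\ \ge\ 2\,\frac{\max_i\|\mathbf u_i\|_2^2}{s_{\min}(\mathbf U)^2}\Big(s_{\max}(\mathbf U)^2\|\mathbf A_\star-\mathbf I\|_F^2+c\,\|\mathbf b_\star\|_2^2\Big),$$ and run gradient descent $$\mathbf A_{k+1}=\mathbf A_k-t_{\mathbf A}\nabla_{\mathbf A}\varphi^{\mathrm{inv}}_{L^2,\sigma}(\mathbf A_k,\mathbf b_k),\qquad \mathbf b_{k+1}=\mathbf b_k-t_{\mathbf b}\nabla_{\mathbf b}\varphi^{\mathrm{inv}}_{L^2,\sigma}(\mathbf A_k,\mathbf b_k)$$ with step sizes $t_{\mathbf A}=\dfrac{8\pi c\sigma^4}{s_{\max}(\mathbf U)^2}$, $t_{\mathbf b}=8\pi\sigma^4$, from $\mathbf A_0=\mathbf I$, $\mathbf b_0=\mathbf 0$. Then for all $k\ge 0$, $$\frac{8\pi\sigma^4}{t_{\mathbf A}}\|\mathbf A_k-\mathbf A_\star\|_F^2+\|\mathbf b_k-\mathbf b_\star\|_2^2\ \le\ \Big(1-\frac{1}{2\kappa}\Big)^{2k}\Big(\frac{8\pi\sigma^4}{t_{\mathbf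 A}}\|\mathbf I-\mathbf A_\star\|_F^2+\|\mathbf b_\star\|_2^2\Big).$$
   Context: Signals are $c$-channel (generalized) functions on $\mathbb R^2$, i.e. elements of $\mathbb R^{\mathbb R\times\mathbb R\times c}$; for $\mathbf S$ such a signal, $\|\mathbf S\|_{L^2}^2=\sum_{i=1}^c\|\mathbf S_i\|_{L^2(\mathbb R^2)}^2$. $\delta_{\mathbf p}$ is the Dirac distribution at $\mathbf p\in\mathbb R^2$, and $\delta_{\mathbf p}\otimes\mathbf e_i$ is the signal whose $i$-th channel is $\delta_{\mathbf p}$ and whose other channels are zero. For $\mathbf p\in\mathbb R^2$ and positive semidefinite $\mathbf M\in\mathbb R^{2\times2}$, $\mathbf g_{\mathbf p,\mathbf M}$ is the Gaussian density on $\mathbb R^2$ with mean $\mathbf p$ and covariance $\mathbf M$ (a Dirac at $\mathbf p$ if $\mathbf M=\mathbf 0$). Convolutions $\ast$ are applied channelwise. For $\mathbf A\in\mathbb R^{2\times2}$, $\mathbf b\in\mathbb R^2$, $(\mathbf S\circ\tau_{\mathbf A,\mathbf b})(\mathbf x)=\mathbf S(\mathbf A\mathbf x+\mathbf b)$. $\mathbf A^*$ is the transpose, $\mathbf 1\in\mathbb R^c$ the all-ones vector, and $\mathbf e_i$ the standard basis vectors. *)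

theory Defs
  imports "HOL-Probability.Probability"
begin

type_synonym pt = "real^2"
type_synonym mat2 = "real^2^2"

text \<open>A c-channel signal: channel i (for i in 1..c) is a (finite, nonnegative) measure
  on the plane, i.e. a generalized function; a locally integrable function f is
  identified with the measure of density f w.r.t. Lebesgue measure.\<close>
type_synonym signal = "nat \<Rightarrow> pt measure"

definition psd :: "mat2 \<Rightarrow> bool" where
  "psd M \<longleftrightarrow> transpose M = M \<and> (\<forall>x. 0 \<le> x \<bullet> (M *v x))"

definition std_gauss :: "pt measure" where
  "std_gauss = density lborel (\<lambda>x. ennreal (exp (- ((norm x) ^ 2) / 2) / (2 * pi)))"

text \<open>Gaussian with mean p and (positive semidefinite) covariance M, as the image of the
  standard Gaussian under x \<mapsto> p + L x with L L^T = M.  For M = 0 this is the Dirac at p.\<close>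
definition gauss :: "pt \<Rightarrow> mat2 \<Rightarrow> pt measure" where
  "gauss p M = distr std_gauss borel (\<lambda>x. p + (SOME L. L ** transpose L = M) *v x)"

definition dirac :: "pt \<Rightarrow> pt measure" where
  "dirac p = return borel p"

definition conv :: "pt measure \<Rightarrow> pt measure \<Rightarrow> pt measure" where
  "conv M N = distr (M \<Otimes>\<^sub>M N) borel (\<lambda>(x, y). x + y)"

definition conv_sig :: "pt measure \<Rightarrow> signal \<Rightarrow> signal" where
  "conv_sig G S = (\<lambda>i. conv G (S i))"

definition scale_sig :: "real \<Rightarrow> signal \<Rightarrow> signal" where
  "scale_sig r S = (\<lambda>i. scale_measure (ennreal r) (S i))"

text \<open>Composition with the affine map tau_{A,b}(x) = A x + b, i.e. (S o tau)(x) = S(A x + b),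
  for invertible A, extended to measures in the standard distributional way:
  if S has density f, the result has density x \<mapsto> f(A x + b).\<close>
definition comp_tau :: "signal \<Rightarrow> mat2 \<Rightarrow> pt \<Rightarrow> signal" where
  "comp_tau S A b = (\<lambda>i. scale_measure (ennreal (1 / \<bar>det A\<bar>))
                         (distr (S i) borel (\<lambda>y. matrix_inv A *v (y - b))))"

definition dens :: "pt measure \<Rightarrow> pt \<Rightarrow> real" where
  "dens \<mu> x = enn2real (RN_deriv lborel \<mu> x)"

definition l2_dist_sq :: "nat \<Rightarrow> signal \<Rightarrow> signal \<Rightarrow> real" where
  "l2_dist_sq c S T = (\<Sum>i=1..c. \<integral>x. (dens (S i) x - dens (T i) x)^2 \<partial>lborel)"

text \<open>The signal sum_{i=1}^c delta_{p i} \<otimes> e_i (channels outside 1..c are irrelevant).\<close>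
definition dirac_sig :: "(nat \<Rightarrow> pt) \<Rightarrow> signal" where
  "dirac_sig p = (\<lambda>i. dirac (p i))"

definition phi_L2 :: "nat \<Rightarrow> (nat \<Rightarrow> pt) \<Rightarrow> (nat \<Rightarrow> pt) \<Rightarrow> real \<Rightarrow> real \<Rightarrow> mat2 \<Rightarrow> pt \<Rightarrow> real" where
  "phi_L2 c u v \<sigma> \<sigma>0 A b =
     1 / (2 * real c) * l2_dist_sq c
       (conv_sig (gauss 0 (\<sigma>^2 *\<^sub>R mat 1 - \<sigma>0^2 *\<^sub>R matrix_inv (transpose A ** A)))
          (scale_sig (sqrt (det (transpose A ** A)))
             (comp_tau (conv_sig (gauss 0 (\<sigma>0^2 *\<^sub>R mat 1)) (dirac_sig u)) A b)))
       (conv_sig (gauss 0 (\<sigma>^2 *\<^sub>R mat 1)) (dirac_sig v))"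

definition phi_inv :: "nat \<Rightarrow> (nat \<Rightarrow> pt) \<Rightarrow> (nat \<Rightarrow> pt) \<Rightarrow> real \<Rightarrow> real \<Rightarrow> mat2 \<Rightarrow> pt \<Rightarrow> real" where
  "phi_inv c u v \<sigma> \<sigma>0 A b = phi_L2 c u v \<sigma> \<sigma>0 (matrix_inv A) (- (matrix_inv A *v b))"

text \<open>Partial gradients (w.r.t. the Frobenius inner product on matrices, Euclidean on vectors).\<close>
definition grad_A :: "(mat2 \<Rightarrow> pt \<Rightarrow> real) \<Rightarrow> mat2 \<Rightarrow> pt \<Rightarrow> mat2" where
  "grad_A f A b = (SOME G. GDERIV (\<lambda>A'. f A' b) A :> G)"

definition grad_b :: "(mat2 \<Rightarrow> pt \<Rightarrow> real) \<Rightarrow> mat2 \<Rightarrow> pt \<Rightarrow> pt" where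
  "grad_b f A b = (SOME g. GDERIV (\<lambda>b'. f A b') b :> g)"

definition frob_norm :: "mat2 \<Rightarrow> real" where
  "frob_norm M = sqrt (\<Sum>i\<in>UNIV. \<Sum>j\<in>UNIV. (M $ i $ j)^2)"

text \<open>U U^T for U = [u_1, ..., u_c] in R^{2 x c}.\<close>
definition gram :: "nat \<Rightarrow> (nat \<Rightarrow> pt) \<Rightarrow> mat2" where
  "gram c u = (\<chi> j k. \<Sum>i=1..c. u i $ j * u i $ k)"

definition eigvals :: "mat2 \<Rightarrow> real set" where
  "eigvals M = {l. \<exists>x. x \<noteq> 0 \<and> M *v x = l *\<^sub>R x}"

text \<open>Largest / smallest singular value of the 2 x c matrix U (c >= 2): square roots of the
  largest / smallest eigenvalue of U U^T.\<close>
definition s_max :: "nat \<Rightarrow> (nat \<Rightarrow> pt) \<Rightarrow> real" where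
  "s_max c u = sqrt (Max (eigvals (gram c u)))"

definition s_min :: "nat \<Rightarrow> (nat \<Rightarrow> pt) \<Rightarrow> real" where
  "s_min c u = sqrt (Min (eigvals (gram c u)))"

end

theory Submission
  imports Defs
begin

text \<open>
  For invertible \<open>A\<close> the objective has a closed form: blurring the Dirac at \<open>u\<close> with covariance
  \<open>\<sigma>0\<^sup>2 I\<close>, warping by \<open>\<tau>\<close> and blurring with the complementary covariance yields exactly the Gaussian
  of covariance \<open>\<sigma>\<^sup>2 I\<close> centred at \<open>A u + b\<close>, and two such Gaussians with means \<open>p, q\<close> are at
  squared \<open>L\<^sup>2\<close> distance \<open>(1 - exp (-|p - q|\<^sup>2 / (4 \<sigma>\<^sup>2))) / (2 \<pi> \<sigma>\<^sup>2)\<close>. A gradient step is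
  therefore a least-squares step on the residuals \<open>r i = (A - A\<^sub>\<star>) u i + (b - b\<^sub>\<star>)\<close> with weights
  \<open>e i = exp (-|r i|\<^sup>2 / (4 \<sigma>\<^sup>2))\<close>. As \<open>U 1 = 0\<close> decouples \<open>A\<close> and \<open>b\<close>, it maps the error
  \<open>z = (A - A\<^sub>\<star>, b - b\<^sub>\<star>)\<close> to \<open>(1 - P) z\<close>, where \<open>P\<close> is self-adjoint for the energy
  \<open>s_max\<^sup>2 / c \<parallel>A - A\<^sub>\<star>\<parallel>\<^sub>F\<^sup>2 + \<parallel>b - b\<^sub>\<star>\<parallel>\<^sup>2\<close> and \<open>1 / (2 \<kappa>) \<le> P \<le> 1\<close> as long as
  every \<open>e i \<ge> 1/2\<close>; so the energy contracts by \<open>(1 - 1 / (2 \<kappa>))\<^sup>2\<close>. The lower bound on \<open>\<sigma>\<close> gives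
  \<open>|r i|\<^sup>2 \<le> \<sigma>\<^sup>2\<close>, hence \<open>e i \<ge> 1/2\<close>, whenever the energy does not exceed its initial value,
  which closes the induction.
\<close>

section \<open>Coordinates of plane vectors and matrices\<close>

lemma Basis_vec2: "(Basis :: pt set) = {axis 1 1, axis 2 1}"
  by (auto simp: Basis_vec_def UNIV_2)

lemma prod_Basis_vec2: "(\<Prod>b\<in>(Basis::pt set). f b) = f (axis 1 1) * f (axis 2 1)"
  by (simp add: Basis_vec2 axis_eq_axis)

lemma vector2_eq_axis: "(vector [s,t] :: pt) = s *\<^sub>R axis 1 1 + t *\<^sub>R axis 2 1"
  by (simp add: vec_eq_iff forall_2 axis_def)

lemma matrix_vector_mult_vec2:
  "((A::mat2) *v x) $ 1 = A$1$1 * x$1 + A$1$2 * x$2"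
  "((A::mat2) *v x) $ 2 = A$2$1 * x$1 + A$2$2 * x$2"
  by (simp_all add: matrix_vector_mult_def sum_2)

lemma matrix_matrix_mult_mat2: "((A::mat2) ** B) $ i $ j = A$i$1 * B$1$j + A$i$2 * B$2$j"
  by (simp add: matrix_matrix_mult_def sum_2)

lemma matrix_vector_mult_row: "((A::mat2) *v x) $ j = A$j \<bullet> x"
  by (simp add: matrix_vector_mult_def inner_vec_def mult.commute)

lemma vec2_eq_iff: "(x::pt) = y \<longleftrightarrow> x$1 = y$1 \<and> x$2 = y$2"
  by (simp add: vec_eq_iff forall_2)

lemma mat2_eq_iff: "(A::mat2) = B \<longleftrightarrow> A$1$1 = B$1$1 \<and> A$1$2 = B$1$2 \<and> A$2$1 = B$2$1 \<and> A$2$2 = B$2$2"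
  by (simp add: vec_eq_iff forall_2)

lemma mat_1_mat2: "(mat 1 :: mat2) $ 1 $ 1 = 1" "(mat 1 :: mat2) $ 2 $ 2 = 1" "(mat 1 :: mat2) $ 1 $ 2 = 0" "(mat 1 :: mat2) $ 2 $ 1 = 0"
  by (simp_all add: mat_def)

lemma transpose_mat2: "transpose (A::mat2) $ i $ j = A $ j $ i" by (simp add: transpose_def)

lemma inner_vec2: "(x::pt) \<bullet> y = x$1 * y$1 + x$2 * y$2"
  by (simp add: inner_vec_def sum_2)

lemma inner_mat2: "(A::mat2) \<bullet> B = A$1 \<bullet> B$1 + A$2 \<bullet> B$2"
  by (simp add: inner_vec_def sum_2)

lemma norm_vec2_sq: "(norm (x::pt))^2 = (x$1)^2 + (x$2)^2"
  by (simp add: norm_vec_def L2_set_def sum_2)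

lemma frob_norm_sq: "frob_norm M ^ 2 = M \<bullet> M"
proof -
  have "frob_norm M ^ 2 = (\<Sum>i\<in>UNIV. \<Sum>j\<in>UNIV. (M $ i $ j)^2)"
    unfolding frob_norm_def by (simp add: sum_nonneg)
  also have "\<dots> = M \<bullet> M" by (simp add: inner_vec_def power2_eq_square)
  finally show ?thesis .
qed

lemma matrix_mul_zero_left: "(0::'a::semiring_1^'n^'m) ** X = 0"
  by (simp add: matrix_matrix_mult_def vec_eq_iff)

lemma matrix_mul_zero_right: "X ** (0::'a::semiring_1^'p^'n) = (0::'a^'p^'m)"
  by (simp add: matrix_matrix_mult_def vec_eq_iff)

lemma det_scaleR_mat_1: "det (c *\<^sub>R (mat 1 :: mat2)) = c^2"
  by (simp add: det_2 mat_1_mat2 power2_eq_square)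

lemma det_gram: "det ((L::mat2) ** transpose L) = (det L)^2"
  by (simp add: det_mul det_transpose power2_eq_square)

definition inv_mat2 :: "mat2 \<Rightarrow> mat2" where
  "inv_mat2 A = (\<chi> i j. (if i = 1 then (if j = 1 then A$2$2 else - A$1$2) else (if j = 1 then - A$2$1 else A$1$1)) / det A)"

lemma inv_mat2_components: "inv_mat2 A $1$1 = A$2$2 / det A" "inv_mat2 A $1$2 = - A$1$2 / det A"
  "inv_mat2 A $2$1 = - A$2$1 / det A" "inv_mat2 A $2$2 = A$1$1 / det A"
  by (simp_all add: inv_mat2_def)

lemma matrix_mul_inv_mat2_right: "det A \<noteq> 0 \<Longrightarrow> A ** inv_mat2 A = mat 1"
  by (simp add: mat2_eq_iff matrix_matrix_mult_mat2 inv_mat2_components mat_1_mat2 field_simps; simp add: det_2 algebra_simps)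

lemma matrix_mul_inv_mat2_left: "det A \<noteq> 0 \<Longrightarrow> inv_mat2 A ** A = mat 1"
  by (simp add: mat2_eq_iff matrix_matrix_mult_mat2 inv_mat2_components mat_1_mat2 field_simps; simp add: det_2 algebra_simps)

lemma matrix_inv_eq_inv_mat2: assumes "det A \<noteq> 0" shows "matrix_inv A = inv_mat2 A"
proof -
  have ex: "A ** inv_mat2 A = mat 1 \<and> inv_mat2 A ** A = mat 1" using assms matrix_mul_inv_mat2_right matrix_mul_inv_mat2_left by auto
  then have s: "A ** matrix_inv A = mat 1 \<and> matrix_inv A ** A = mat 1"
    unfolding matrix_inv_def by (rule someI)
  have "matrix_inv A = (inv_mat2 A ** A) ** matrix_inv A" using ex by (simp add: matrix_mul_lid)
  also have "\<dots> = inv_mat2 A ** (A ** matrix_inv A)" by (simp add: matrix_mul_assoc)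
  also have "\<dots> = inv_mat2 A" using s by (simp add: matrix_mul_rid)
  finally show ?thesis .
qed

lemma matrix_inv_eq_right_inverse: assumes "det (X::mat2) \<noteq> 0" "X ** Y = mat 1" shows "matrix_inv X = Y"
proof -
  have "matrix_inv X = inv_mat2 X ** (X ** Y)" using assms by (simp add: matrix_inv_eq_inv_mat2 matrix_mul_rid)
  also have "\<dots> = Y" using matrix_mul_inv_mat2_left[OF assms(1)] by (simp add: matrix_mul_assoc matrix_mul_lid)
  finally show ?thesis .
qed

lemma det_inv_mat2: assumes "det A \<noteq> 0" shows "det (inv_mat2 A) = 1 / det A"
proof -
  have "det (inv_mat2 A) = (A$1$1 * A$2$2 - A$1$2 * A$2$1) / (det A * det A)"
    using assms by (subst det_2) (simp add: inv_mat2_components field_simps)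
  also have "\<dots> = 1 / det A" using assms by (simp add: det_2[symmetric])
  finally show ?thesis .
qed

lemma matrix_inv_matrix_inv_mat2:
  assumes dA: "det (A::mat2) \<noteq> 0"
  shows "matrix_inv (matrix_inv A) = A"
proof -
  have "det (inv_mat2 A) \<noteq> 0" using det_inv_mat2[OF dA] dA by simp
  then show ?thesis
    unfolding matrix_inv_eq_inv_mat2[OF dA] by (rule matrix_inv_eq_right_inverse[OF _ matrix_mul_inv_mat2_left[OF dA]])
qed

lemma matrix_inv_gram_matrix_inv:
  assumes dA: "det (A::mat2) \<noteq> 0"
  shows "matrix_inv (transpose (matrix_inv A) ** matrix_inv A) = A ** transpose A"
proof (rule matrix_inv_eq_right_inverse)
  let ?Ai = "inv_mat2 A"
  show "det (transpose (matrix_inv A) ** matrix_inv A) \<noteq> 0"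
    using dA det_inv_mat2[OF dA] by (simp add: matrix_inv_eq_inv_mat2 det_mul det_transpose)
  have "(transpose ?Ai ** ?Ai) ** (A ** transpose A) = transpose ?Ai ** (?Ai ** A) ** transpose A"
    by (simp add: matrix_mul_assoc)
  also have "\<dots> = transpose (A ** ?Ai)"
    by (simp add: matrix_mul_inv_mat2_left[OF dA] matrix_transpose_mul)
  also have "\<dots> = mat 1" by (simp add: matrix_mul_inv_mat2_right[OF dA])
  finally show "(transpose (matrix_inv A) ** matrix_inv A) ** (A ** transpose A) = mat 1"
    by (simp add: matrix_inv_eq_inv_mat2[OF dA])
qed

text \<open>\<open>adj_qf M a\<close> is \<open>a\<^sup>T adj(M) a\<close>, so \<open>a\<^sup>T M\<^sup>-\<^sup>1 a = adj_qf M a / det M\<close>.\<close>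
definition adj_qf :: "mat2 \<Rightarrow> pt \<Rightarrow> real" where
  "adj_qf M a = M$2$2 * (a$1)^2 - 2 * M$1$2 * (a$1) * (a$2) + M$1$1 * (a$2)^2"

lemma adj_qf_mat_1: "adj_qf (mat 1) a = (norm a)^2"
  by (simp add: adj_qf_def mat_1_mat2 norm_vec2_sq)

lemma scaled_inv_gram:
  fixes L :: mat2 and \<tau> :: real
  assumes d: "det L \<noteq> 0"
  defines "M \<equiv> \<tau>^2 *\<^sub>R (inv_mat2 L ** transpose (inv_mat2 L))"
  shows "det M = \<tau>^4 / (det L)^2" and "adj_qf M (inv_mat2 L *v z) = \<tau>^2 * (norm z)^2 / (det L)^2"
proof -
  have e: "M$1$1 = \<tau>^2 * ((L$2$2)^2 + (L$1$2)^2) / (det L)^2"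
          "M$1$2 = - (\<tau>^2 * (L$2$2 * L$2$1 + L$1$2 * L$1$1) / (det L)^2)"
          "M$2$2 = \<tau>^2 * ((L$2$1)^2 + (L$1$1)^2) / (det L)^2"
          "M$2$1 = - (\<tau>^2 * (L$2$2 * L$2$1 + L$1$2 * L$1$1) / (det L)^2)"
    using d by (simp_all add: M_def matrix_matrix_mult_mat2 transpose_mat2 inv_mat2_components power2_eq_square field_simps)
  have dd: "det L = L$1$1 * L$2$2 - L$1$2 * L$2$1" by (rule det_2)
  show "det M = \<tau>^4 / (det L)^2"
    unfolding det_2[of M] e using d
    by (simp add: field_simps power2_eq_square) (simp add: dd algebra_simps power2_eq_square power4_eq_xxxx)
  show "adj_qf M (inv_mat2 L *v z) = \<tau>^2 * (norm z)^2 / (det L)^2"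
    unfolding adj_qf_def e norm_vec2_sq matrix_vector_mult_vec2 inv_mat2_components using d
    by (simp add: field_simps power2_eq_square) (simp add: dd algebra_simps power2_eq_square)
qed

lemma mat_1_plus_gram_inv_mult:
  fixes L1 L2 :: mat2
  assumes C: "L1 ** transpose L1 + L2 ** transpose L2 = \<tau>^2 *\<^sub>R mat 1" and d: "det L2 \<noteq> 0"
  shows "mat 1 + (inv_mat2 L2 ** L1) ** transpose (inv_mat2 L2 ** L1) = \<tau>^2 *\<^sub>R (inv_mat2 L2 ** transpose (inv_mat2 L2))"
proof -
  let ?Li = "inv_mat2 L2"
  have "(?Li ** L1) ** transpose (?Li ** L1) = ?Li ** (L1 ** transpose L1) ** transpose ?Li"
    by (simp add: matrix_transpose_mul matrix_mul_assoc)
  also have "L1 ** transpose L1 = \<tau>^2 *\<^sub>R mat 1 - L2 ** transpose L2"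
    using C by (simp add: eq_diff_eq)
  finally have e: "(?Li ** L1) ** transpose (?Li ** L1) = ?Li ** (\<tau>^2 *\<^sub>R mat 1 - L2 ** transpose L2) ** transpose ?Li" .
  show ?thesis unfolding e
    using d by (simp add: mat2_eq_iff matrix_matrix_mult_mat2 transpose_mat2 inv_mat2_components mat_1_mat2 field_simps power2_eq_square; simp add: det_2 algebra_simps)
qed

lemma gram_mult_isotropic: "(A ** L) ** transpose (A ** L) = c *\<^sub>R (A ** transpose A)" if "L ** transpose L = c *\<^sub>R (mat 1::mat2)" for A L :: mat2
proof -
  have "(A ** L) ** transpose (A ** L) = A ** (L ** transpose L) ** transpose A"
    by (simp add: matrix_transpose_mul matrix_mul_assoc)
  also have "\<dots> = c *\<^sub>R (A ** transpose A)" unfolding that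
    by (simp add: mat2_eq_iff matrix_matrix_mult_mat2 transpose_mat2 mat_1_mat2 algebra_simps)
  finally show ?thesis .
qed

lemma psd_scaleR_mat_1: "psd (c *\<^sub>R (mat 1 :: mat2))" if "c \<ge> 0" for c
proof -
  have "0 \<le> x $ 1 * (c * x $ 1) + x $ 2 * (c * x $ 2)" for x :: pt
  proof -
    have "x $ 1 * (c * x $ 1) + x $ 2 * (c * x $ 2) = c * ((x$1)^2 + (x$2)^2)" by (simp add: power2_eq_square algebra_simps)
    then show ?thesis using that by simp
  qed
  then show ?thesis by (simp add: psd_def transpose_scalar inner_vec_def sum_2 matrix_vector_mult_vec2 mat_1_mat2)
qed

definition mat2_of :: "real \<Rightarrow> real \<Rightarrow> real \<Rightarrow> real \<Rightarrow> mat2" where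
  "mat2_of a b c d = (\<chi> i j. if i = 1 then (if j = 1 then a else b) else (if j = 1 then c else d))"

lemma mat2_of_components[simp]: "mat2_of a b c d $1$1 = a" "mat2_of a b c d $1$2 = b" "mat2_of a b c d $2$1 = c" "mat2_of a b c d $2$2 = d"
  by (simp_all add: mat2_of_def)

lemma mat2_of_lower_gram: "mat2_of a 0 c d ** transpose (mat2_of a 0 c d) = mat2_of (a*a) (a*c) (a*c) (c*c + d*d)"
  by (simp add: mat2_eq_iff matrix_matrix_mult_mat2 transpose_mat2)

lemma psd_factor_exists: assumes "psd M" shows "\<exists>L::mat2. L ** transpose L = M"
proof -
  from assms have sym: "transpose M = M" and pos: "\<And>x. 0 \<le> x \<bullet> (M *v x)" by (auto simp: psd_def)
  have m21: "M$2$1 = M$1$2" using arg_cong[OF sym, of "\<lambda>X. X$1$2"] by (simp add: transpose_mat2)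
  have q: "0 \<le> M$1$1 * x1^2 + 2 * M$1$2 * x1 * x2 + M$2$2 * x2^2" for x1 x2
    using pos[of "vector [x1, x2]"] m21
    by (simp add: inner_vec_def sum_2 matrix_vector_mult_vec2 power2_eq_square algebra_simps)
  have m11: "M$1$1 \<ge> 0" using q[of 1 0] by simp
  have m22: "M$2$2 \<ge> 0" using q[of 0 1] by simp
  have Meq: "M = mat2_of (M$1$1) (M$1$2) (M$1$2) (M$2$2)" using m21 by (simp add: mat2_eq_iff)
  show ?thesis
  proof (cases "M$1$1 = 0")
    case True
    have "M$1$2 = 0"
    proof (rule ccontr)
      assume ne: "M$1$2 \<noteq> 0"
      have "0 \<le> 2 * M$1$2 * (- (M$2$2 + 1) / (2 * M$1$2)) * 1 + M$2$2 * 1^2"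
        using q[of "- (M$2$2 + 1) / (2 * M$1$2)" 1] True by simp
      also have "\<dots> = -1" using ne by (simp add: field_simps)
      finally show False by simp
    qed
    then have "mat2_of 0 0 0 (sqrt (M$2$2)) ** transpose (mat2_of 0 0 0 (sqrt (M$2$2))) = M"
      using True m22 by (subst Meq, simp only: mat2_of_lower_gram) simp
    then show ?thesis by blast
  next
    case False
    then have p: "M$1$1 > 0" using m11 by simp
    define e where "e = M$2$2 - (M$1$2)^2 / M$1$1"
    have dnn: "e \<ge> 0"
    proof -
      have "0 \<le> M$1$1 * (- M$1$2 / M$1$1)^2 + 2 * M$1$2 * (- M$1$2 / M$1$1) * 1 + M$2$2 * 1^2" by (rule q)
      also have "\<dots> = e" using p by (simp add: e_def field_simps power2_eq_square)
      finally show ?thesis .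
    qed
    have a: "sqrt (M$1$1) * sqrt (M$1$1) = M$1$1" using p by simp
    have c: "sqrt (M$1$1) * (M$1$2 / sqrt (M$1$1)) = M$1$2" using p by simp
    have d: "M$1$2 / sqrt (M$1$1) * (M$1$2 / sqrt (M$1$1)) + sqrt e * sqrt e = M$2$2"
      using p dnn by (simp add: e_def power2_eq_square[symmetric] power_divide)
    have "mat2_of (sqrt (M$1$1)) 0 (M$1$2 / sqrt (M$1$1)) (sqrt e) ** transpose (mat2_of (sqrt (M$1$1)) 0 (M$1$2 / sqrt (M$1$1)) (sqrt e)) = M"
      by (subst (3) Meq, simp only: mat2_of_lower_gram a c d)
    then show ?thesis by blast
  qed
qed

section \<open>Gaussian integrals over the plane\<close>

lemma measurable_vector2[measurable]: "(\<lambda>(s,t). vector [s,t] :: pt) \<in> borel_measurable (lborel \<Otimes>\<^sub>M lborel)"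
proof -
  have "(\<lambda>(s,t). vector [s,t] :: pt) \<in> borel_measurable borel"
    unfolding vector2_eq_axis
    by (intro borel_measurable_continuous_onI)
       (auto simp: case_prod_beta intro!: continuous_on_add continuous_on_scaleR continuous_on_fst continuous_on_snd continuous_on_id continuous_on_const)
  then show ?thesis by (simp add: borel_prod[symmetric])
qed

lemma distr_lborel_vector2: "distr (lborel \<Otimes>\<^sub>M lborel) borel (\<lambda>(s,t). vector [s,t] :: pt) = lborel"
proof (rule lborel_eqI[symmetric])
  show "sets (distr (lborel \<Otimes>\<^sub>M lborel) borel (\<lambda>(s, t). vector [s, t] :: pt)) = sets borel" by simp
  fix l u :: pt assume le: "\<And>b. b \<in> Basis \<Longrightarrow> l \<bullet> b \<le> u \<bullet> b"
  have pre: "(\<lambda>(s, t). vector [s, t] :: pt) -` box l u = {l$1<..<u$1} \<times> {l$2<..<u$2}"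
    by (auto simp: mem_box_cart forall_2)
  show "emeasure (distr (lborel \<Otimes>\<^sub>M lborel) borel (\<lambda>(s, t). vector [s, t] :: pt)) (box l u) = (\<Prod>b\<in>Basis. (u - l) \<bullet> b)"
  proof -
    have "l$1 \<le> u$1" "l$2 \<le> u$2" using le[of "axis 1 1"] le[of "axis 2 1"] by (auto simp: Basis_vec2 inner_axis)
    then show ?thesis
      by (simp add: emeasure_distr pre lborel.emeasure_pair_measure_Times prod_Basis_vec2 inner_axis ennreal_mult)
  qed
qed

lemma nn_integral_lborel_vec2:
  assumes [measurable]: "f \<in> borel_measurable (borel :: pt measure)"
  shows "(\<integral>\<^sup>+x. f x \<partial>lborel) = (\<integral>\<^sup>+s. \<integral>\<^sup>+t. f (vector [s,t]) \<partial>lborel \<partial>lborel)"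
proof -
  have "(\<integral>\<^sup>+x. f x \<partial>lborel) = (\<integral>\<^sup>+x. f x \<partial>distr (lborel \<Otimes>\<^sub>M lborel) borel (\<lambda>(s,t). vector [s,t] :: pt))"
    by (simp add: distr_lborel_vector2)
  also have "\<dots> = (\<integral>\<^sup>+p. f (case p of (s,t) \<Rightarrow> vector [s,t]) \<partial>(lborel \<Otimes>\<^sub>M lborel))"
    by (simp add: nn_integral_distr)
  also have "\<dots> = (\<integral>\<^sup>+s. \<integral>\<^sup>+t. f (vector [s,t]) \<partial>lborel \<partial>lborel)"
    by (subst lborel.nn_integral_fst[symmetric]) (auto simp: case_prod_beta)
  finally show ?thesis .
qed

lemma measurable_matrix_vector_mult[measurable]: "(\<lambda>x. (L::mat2) *v x) \<in> borel_measurable borel"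
  by (intro borel_measurable_continuous_onI linear_continuous_on) (simp add: matrix_vector_mul_linear linear_conv_bounded_linear)

lemma lborel_eq_density_affine:
  fixes L :: mat2 and p :: pt
  assumes d: "det L \<noteq> 0"
  shows "lborel = density (distr lborel borel (\<lambda>x. p + L *v x)) (\<lambda>_. ennreal \<bar>det L\<bar>)"
proof (rule lborel_eqI)
  show "sets (density (distr lborel borel (\<lambda>x. p + L *v x)) (\<lambda>_. ennreal \<bar>det L\<bar>)) = sets borel" by simp
  fix l u :: pt assume le: "\<And>b. b \<in> Basis \<Longrightarrow> l \<bullet> b \<le> u \<bullet> b"
  let ?T = "\<lambda>x. p + L *v x"
  let ?Li = "inv_mat2 L"
  have TB: "?T -` box l u = (\<lambda>y. ?Li *v y) ` box (l - p) (u - p)"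
  proof (rule set_eqI, rule iffI)
    fix x assume "x \<in> ?T -` box l u"
    then have "L *v x \<in> box (l - p) (u - p)" by (fastforce simp: mem_box_cart algebra_simps)
    moreover have "x = ?Li *v (L *v x)" using matrix_mul_inv_mat2_left[OF d] by (simp add: matrix_vector_mul_assoc)
    ultimately show "x \<in> (\<lambda>y. ?Li *v y) ` box (l - p) (u - p)" by blast
  next
    fix x assume "x \<in> (\<lambda>y. ?Li *v y) ` box (l - p) (u - p)"
    then obtain y where y: "y \<in> box (l - p) (u - p)" "x = ?Li *v y" by blast
    then have "L *v x = y" using matrix_mul_inv_mat2_right[OF d] by (simp add: matrix_vector_mul_assoc)
    with y show "x \<in> ?T -` box l u" by (fastforce simp: mem_box_cart algebra_simps)
  qed
  have mT: "?T \<in> borel_measurable borel" by measurable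
  have bor: "?T -` box l u \<in> sets lborel"
    using measurable_sets[OF mT borel_open[OF open_box]] by simp
  have lm: "(\<lambda>y. ?Li *v y) ` box (l - p) (u - p) \<in> lmeasurable"
    by (rule measurable_linear_image) (auto simp: matrix_vector_mul_linear)
  have "emeasure lborel (?T -` box l u) = emeasure lebesgue (?T -` box l u)"
    using bor by simp
  also have "\<dots> = ennreal (measure lebesgue ((\<lambda>y. ?Li *v y) ` box (l - p) (u - p)))"
    using lm TB by (simp add: emeasure_eq_measure2)
  also have "\<dots> = ennreal (\<bar>det ?Li\<bar> * measure lebesgue (box (l - p) (u - p)))"
    by (subst measure_linear_image) (auto simp: matrix_vector_mul_linear)
  also have "measure lebesgue (box (l - p) (u - p)) = (\<Prod>b\<in>Basis. (u - l) \<bullet> b)"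
    using le by (simp add: measure_lborel_box_eq inner_diff_left)
  finally have e: "emeasure lborel (?T -` box l u) = ennreal (\<bar>1 / det L\<bar> * (\<Prod>b\<in>Basis. (u - l) \<bullet> b))"
    using det_inv_mat2[OF d] by simp
  have pos: "0 \<le> (\<Prod>b\<in>Basis. (u - l) \<bullet> b)" using le by (auto intro!: prod_nonneg simp: inner_diff_left)
  show "emeasure (density (distr lborel borel ?T) (\<lambda>_. ennreal \<bar>det L\<bar>)) (box l u) = (\<Prod>b\<in>Basis. (u - l) \<bullet> b)"
    using d pos by (simp add: emeasure_density emeasure_distr e nn_integral_cmult_indicator
         ennreal_mult[symmetric] abs_mult[symmetric] del: ennreal_mult')
qed

lemma nn_integral_lborel_affine:
  fixes L :: mat2 and p :: pt
  assumes d: "det L \<noteq> 0" and [measurable]: "f \<in> borel_measurable borel"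
  shows "(\<integral>\<^sup>+y. f y \<partial>lborel) = ennreal \<bar>det L\<bar> * (\<integral>\<^sup>+x. f (p + L *v x) \<partial>lborel)"
  by (subst lborel_eq_density_affine[OF d, of p]) (simp add: nn_integral_density nn_integral_distr nn_integral_cmult)

lemma nn_integral_lborel_translate:
  fixes f :: "pt \<Rightarrow> ennreal" and c :: pt
  assumes [measurable]: "f \<in> borel_measurable borel"
  shows "(\<integral>\<^sup>+y. f (c + y) \<partial>lborel) = (\<integral>\<^sup>+w. f w \<partial>lborel)"
  using nn_integral_lborel_affine[of "mat 1" f c] by simp

lemma nn_integral_normal_density: "0 < \<sigma> \<Longrightarrow> (\<integral>\<^sup>+x. ennreal (normal_density \<mu> \<sigma> x) \<partial>lborel) = 1"
proof -
  assume "0 < \<sigma>"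
  interpret prob_space "density lborel (normal_density \<mu> \<sigma>)" by (rule prob_space_normal_density) fact
  have "emeasure (density lborel (normal_density \<mu> \<sigma>)) UNIV = 1" using emeasure_space_1 by simp
  then show ?thesis by (simp add: emeasure_density)
qed

lemma nn_integral_exp_quadratic:
  fixes \<alpha> \<beta> :: real assumes a: "\<alpha> > 0"
  shows "(\<integral>\<^sup>+t. ennreal (exp (-(\<alpha>/2)*t^2 + \<beta>*t)) \<partial>lborel) = ennreal (sqrt (2*pi/\<alpha>) * exp (\<beta>^2/(2*\<alpha>)))"
proof -
  let ?\<mu> = "\<beta>/\<alpha>" and ?\<sigma> = "1 / sqrt \<alpha>"
  have eq: "exp (-(\<alpha>/2)*t^2 + \<beta>*t) = sqrt (2*pi/\<alpha>) * exp (\<beta>^2/(2*\<alpha>)) * normal_density ?\<mu> ?\<sigma> t" for t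
  proof -
    have s: "sqrt (2 * pi * ?\<sigma>\<^sup>2) = sqrt (2*pi/\<alpha>)" using a by (simp add: power_divide)
    have E: "-(\<alpha>/2)*t^2 + \<beta>*t = \<beta>^2/(2*\<alpha>) + (-(t - ?\<mu>)\<^sup>2/ (2 * ?\<sigma>\<^sup>2))"
      using a by (simp add: power_divide field_simps power2_eq_square)
    have "exp (-(\<alpha>/2)*t^2 + \<beta>*t) = exp (\<beta>^2/(2*\<alpha>)) * exp (-(t - ?\<mu>)\<^sup>2/ (2 * ?\<sigma>\<^sup>2))"
      by (simp only: E exp_add)
    moreover have "sqrt (2*pi/\<alpha>) > 0" using a by simp
    ultimately show ?thesis unfolding normal_density_def s using a by (simp add: field_simps)
  qed
  have "(\<integral>\<^sup>+t. ennreal (exp (-(\<alpha>/2)*t^2 + \<beta>*t)) \<partial>lborel)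
      = (\<integral>\<^sup>+t. ennreal (sqrt (2*pi/\<alpha>) * exp (\<beta>^2/(2*\<alpha>))) * ennreal (normal_density ?\<mu> ?\<sigma> t) \<partial>lborel)"
    by (rule nn_integral_cong) (subst eq, rule ennreal_mult', use a in simp)
  also have "\<dots> = ennreal (sqrt (2*pi/\<alpha>) * exp (\<beta>^2/(2*\<alpha>)))"
    using a by (simp add: nn_integral_cmult nn_integral_normal_density)
  finally show ?thesis .
qed

lemma nn_integral_exp_quadratic_form_partial:
  fixes k11 k12 k22 h1 h2 :: real
  assumes k22: "k22 > 0"
  shows "(\<integral>\<^sup>+t. ennreal (exp (-(k11* x^2 + 2*k12* x*t + k22*t^2)/2 + h1* x + h2*t)) \<partial>lborel)
     = ennreal (sqrt (2*pi/k22) * exp (h2^2/(2*k22))) *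
       ennreal (exp (-(((k11 * k22 - k12^2)/k22)/2)* x^2 + (h1 - k12*h2/k22)* x))"
proof -
  have split: "exp (-(k11* x^2 + 2*k12* x*t + k22*t^2)/2 + h1* x + h2*t)
      = exp (-(k22/2)*t^2 + (h2 - k12* x)*t) * exp (-(k11/2)* x^2 + h1* x)" for t
    by (simp add: exp_add[symmetric] field_simps)
  have square: "(h2 - k12* x)^2/(2*k22) + (-(k11/2)* x^2 + h1* x)
      = h2^2/(2*k22) + (-(((k11 * k22 - k12^2)/k22)/2)* x^2 + (h1 - k12*h2/k22)* x)"
    using k22 by (simp add: field_simps power2_eq_square)
  have "(\<integral>\<^sup>+t. ennreal (exp (-(k11* x^2 + 2*k12* x*t + k22*t^2)/2 + h1* x + h2*t)) \<partial>lborel)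
     = (\<integral>\<^sup>+t. ennreal (exp (-(k22/2)*t^2 + (h2 - k12* x)*t)) * ennreal (exp (-(k11/2)* x^2 + h1* x)) \<partial>lborel)"
    by (rule nn_integral_cong) (simp only: split, rule ennreal_mult', simp)
  also have "\<dots> = ennreal (sqrt (2*pi/k22) * exp ((h2 - k12* x)^2/(2*k22))) * ennreal (exp (-(k11/2)* x^2 + h1* x))"
    using nn_integral_exp_quadratic[OF k22, of "h2 - k12 * x"] by (simp add: nn_integral_multc)
  also have "\<dots> = ennreal (sqrt (2*pi/k22) * (exp ((h2 - k12* x)^2/(2*k22)) * exp (-(k11/2)* x^2 + h1* x)))"
    using k22 by (simp add: ennreal_mult[symmetric] mult.assoc)
  also have "\<dots> = ennreal (sqrt (2*pi/k22) * exp (h2^2/(2*k22)) *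
       exp (-(((k11 * k22 - k12^2)/k22)/2)* x^2 + (h1 - k12*h2/k22)* x))"
    by (simp only: exp_add[symmetric] square) (simp add: exp_add mult.assoc)
  finally show ?thesis using k22 by (simp add: ennreal_mult)
qed

lemma nn_integral_exp_quadratic_form:
  fixes k11 k12 k22 h1 h2 :: real
  assumes k22: "k22 > 0" and D: "k11 * k22 - k12^2 > 0"
  shows "(\<integral>\<^sup>+x. \<integral>\<^sup>+t. ennreal (exp (-(k11* x^2 + 2*k12* x*t + k22*t^2)/2 + h1* x + h2*t)) \<partial>lborel \<partial>lborel)
    = ennreal (2*pi / sqrt (k11 * k22 - k12^2) * exp ((k22*h1^2 - 2*k12*h1*h2 + k11*h2^2) / (2*(k11 * k22 - k12^2))))"
proof -
  define Dt where "Dt = k11 * k22 - k12^2"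
  have Dp: "Dt > 0" using D by (simp add: Dt_def)
  have sq: "sqrt (2*pi/k22) * sqrt (2*pi/(Dt/k22)) = 2*pi / sqrt Dt"
  proof -
    have "2*pi/k22 * (2*pi/(Dt/k22)) = (2*pi)^2/Dt" using k22 by (simp add: field_simps power2_eq_square)
    then have "sqrt (2*pi/k22) * sqrt (2*pi/(Dt/k22)) = sqrt ((2*pi)^2/Dt)" by (simp add: real_sqrt_mult[symmetric])
    also have "\<dots> = 2*pi / sqrt Dt" by (simp only: real_sqrt_divide real_sqrt_abs abs_of_nonneg[of "2*pi"]) simp
    finally show ?thesis .
  qed
  have ex: "h2^2/(2*k22) + (h1 - k12*h2/k22)^2/(2*(Dt/k22)) = (k22*h1^2 - 2*k12*h1*h2 + k11*h2^2) / (2*Dt)"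
    using k22 Dp by (simp add: Dt_def field_simps power2_eq_square)
  have "(\<integral>\<^sup>+x. \<integral>\<^sup>+t. ennreal (exp (-(k11* x^2 + 2*k12* x*t + k22*t^2)/2 + h1* x + h2*t)) \<partial>lborel \<partial>lborel)
      = ennreal (sqrt (2*pi/k22) * exp (h2^2/(2*k22))) * (\<integral>\<^sup>+x. ennreal (exp (-((Dt/k22)/2)*x^2 + (h1 - k12*h2/k22)*x)) \<partial>lborel)"
    unfolding nn_integral_exp_quadratic_form_partial[OF k22] Dt_def by (rule nn_integral_cmult) simp
  also have "\<dots> = ennreal (sqrt (2*pi/k22) * exp (h2^2/(2*k22))) * ennreal (sqrt (2*pi/(Dt/k22)) * exp ((h1 - k12*h2/k22)^2/(2*(Dt/k22))))"
    using Dp k22 by (subst nn_integral_exp_quadratic) auto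
  also have "\<dots> = ennreal (sqrt (2*pi/k22) * exp (h2^2/(2*k22)) * (sqrt (2*pi/(Dt/k22)) * exp ((h1 - k12*h2/k22)^2/(2*(Dt/k22)))))"
    using Dp k22 by (intro ennreal_mult[symmetric]) simp_all
  also have "sqrt (2*pi/k22) * exp (h2^2/(2*k22)) * (sqrt (2*pi/(Dt/k22)) * exp ((h1 - k12*h2/k22)^2/(2*(Dt/k22))))
      = (sqrt (2*pi/k22) * sqrt (2*pi/(Dt/k22))) * (exp (h2^2/(2*k22)) * exp ((h1 - k12*h2/k22)^2/(2*(Dt/k22))))"
    by (simp add: mult_ac)
  also have "\<dots> = 2*pi / sqrt Dt * exp ((k22*h1^2 - 2*k12*h1*h2 + k11*h2^2) / (2*Dt))"
    by (simp only: sq ex exp_add[symmetric])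
  finally show ?thesis by (simp add: Dt_def)
qed

lemma nn_integral_exp_quadratic_form_vec2:
  fixes K :: mat2 and h :: pt
  assumes sym: "K$2$1 = K$1$2" and K22: "K$2$2 > 0" and det: "det K > 0"
  shows "(\<integral>\<^sup>+x. ennreal (exp (- (x \<bullet> (K *v x)) / 2 + h \<bullet> x)) \<partial>lborel)
    = ennreal (2*pi / sqrt (det K) * exp (adj_qf K h / (2 * det K)))"
proof -
  have "det K = K$1$1 * K$2$2 - (K$1$2)^2" using sym by (simp add: det_2 power2_eq_square)
  moreover have "- (vector [s,t] \<bullet> (K *v vector [s,t])) / 2 + h \<bullet> vector [s,t]
      = -(K$1$1 * s^2 + 2 * K$1$2 * s * t + K$2$2 * t^2)/2 + h$1 * s + h$2 * t" for s t
    using sym by (simp add: inner_vec_def sum_2 matrix_vector_mult_vec2 power2_eq_square algebra_simps)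
  ultimately show ?thesis
    using nn_integral_exp_quadratic_form[OF K22, of "K$1$1" "K$1$2" "h$1" "h$2"] det
    by (simp add: nn_integral_lborel_vec2 adj_qf_def mult.commute mult.left_commute)
qed

definition std_dens :: "pt \<Rightarrow> real" where
  "std_dens x = exp (- ((norm x) ^ 2) / 2) / (2 * pi)"

lemma std_dens_pos: "std_dens x > 0" by (simp add: std_dens_def)

lemma measurable_std_dens[measurable]: "std_dens \<in> borel_measurable borel"
  unfolding std_dens_def by measurable

lemma nn_integral_std_dens: "(\<integral>\<^sup>+x. ennreal (std_dens x) \<partial>lborel) = 1"
proof -
  have "ennreal (std_dens x) = ennreal (1 / (2*pi)) * ennreal (exp (- (x \<bullet> (mat 1 *v x)) / 2 + 0 \<bullet> x))" for x :: pt
    by (subst ennreal_mult[symmetric]) (simp_all add: std_dens_def power2_norm_eq_inner)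
  then have "(\<integral>\<^sup>+x. ennreal (std_dens x) \<partial>lborel)
      = (\<integral>\<^sup>+x. ennreal (1 / (2*pi)) * ennreal (exp (- (x \<bullet> (mat 1 *v x)) / 2 + 0 \<bullet> (x::pt))) \<partial>lborel)"
    by simp
  also have "\<dots> = ennreal (1 / (2*pi)) * ennreal (2*pi / sqrt (det (mat 1 :: mat2)) * exp (adj_qf (mat 1) 0 / (2 * det (mat 1 :: mat2))))"
    using nn_integral_exp_quadratic_form_vec2[of "mat 1" 0] by (simp add: nn_integral_cmult mat_1_mat2 det_I)
  also have "\<dots> = 1" by (simp add: det_I adj_qf_def ennreal_mult[symmetric])
  finally show ?thesis .
qed

lemma nn_integral_std_dens_product:
  fixes a :: pt and B :: mat2
  defines "M \<equiv> mat 1 + B ** transpose B"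
  shows "(\<integral>\<^sup>+x. ennreal (std_dens (a - B *v x) * std_dens x) \<partial>lborel)
     = ennreal (exp (- adj_qf M a / (2 * det M)) / (2*pi * sqrt (det M)))"
proof -
  define K where "K = mat 1 + transpose B ** B"
  define h where "h = transpose B *v a"
  have K: "K$1$1 = 1 + (B$1$1)^2 + (B$2$1)^2" "K$1$2 = B$1$1 * B$1$2 + B$2$1 * B$2$2"
    "K$2$1 = B$1$1 * B$1$2 + B$2$1 * B$2$2" "K$2$2 = 1 + (B$1$2)^2 + (B$2$2)^2"
    by (simp_all add: K_def matrix_matrix_mult_mat2 transpose_mat2 mat_1_mat2 power2_eq_square)
  have M: "M$1$1 = 1 + (B$1$1)^2 + (B$1$2)^2" "M$1$2 = B$1$1 * B$2$1 + B$1$2 * B$2$2"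
    "M$2$1 = B$1$1 * B$2$1 + B$1$2 * B$2$2" "M$2$2 = 1 + (B$2$1)^2 + (B$2$2)^2"
    by (simp_all add: M_def matrix_matrix_mult_mat2 transpose_mat2 mat_1_mat2 power2_eq_square)
  have h: "h$1 = B$1$1 * a$1 + B$2$1 * a$2" "h$2 = B$1$2 * a$1 + B$2$2 * a$2"
    by (simp_all add: h_def vector_matrix_mult_def sum_2)
  have det_eq: "det K = det M" by (simp add: det_2 K M power2_eq_square algebra_simps)
  have det_pos: "det M > 0"
  proof -
    have "det M = 1 + (B$1$1)^2 + (B$1$2)^2 + (B$2$1)^2 + (B$2$2)^2 + (B$1$1 * B$2$2 - B$1$2 * B$2$1)^2"
      by (simp add: det_2 M power2_eq_square algebra_simps)
    then show ?thesis by (smt (verit) zero_le_power2)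
  qed
  have exponent: "- ((norm (a - B *v x))^2) / 2 - ((norm x)^2) / 2 = - ((norm a)^2) / 2 + (- (x \<bullet> (K *v x)) / 2 + h \<bullet> x)" for x
    unfolding norm_vec2_sq by (simp add: inner_vec_def sum_2 matrix_vector_mult_vec2 K h power2_eq_square field_simps)
  have "(\<integral>\<^sup>+x. ennreal (std_dens (a - B *v x) * std_dens x) \<partial>lborel)
      = (\<integral>\<^sup>+x. ennreal (exp (- ((norm a)^2) / 2) / (4*pi^2)) * ennreal (exp (- (x \<bullet> (K *v x)) / 2 + h \<bullet> x)) \<partial>lborel)"
  proof (rule nn_integral_cong)
    fix x
    have "std_dens (a - B *v x) * std_dens x = exp (- ((norm a)^2) / 2) / (4*pi^2) * exp (- (x \<bullet> (K *v x)) / 2 + h \<bullet> x)"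
      using exponent[of x] unfolding std_dens_def
      by (simp add: exp_add[symmetric] power2_eq_square)
    then show "ennreal (std_dens (a - B *v x) * std_dens x)
        = ennreal (exp (- ((norm a)^2) / 2) / (4*pi^2)) * ennreal (exp (- (x \<bullet> (K *v x)) / 2 + h \<bullet> x))"
      by (simp only:) (rule ennreal_mult; simp)
  qed
  also have "\<dots> = ennreal (exp (- ((norm a)^2) / 2) / (4*pi^2)) * ennreal (2*pi / sqrt (det M) * exp (adj_qf K h / (2 * det M)))"
    using nn_integral_exp_quadratic_form_vec2[of K h] det_pos by (simp add: nn_integral_cmult K det_eq add_pos_nonneg)
  also have "\<dots> = ennreal (exp (- adj_qf M a / (2 * det M)) / (2*pi * sqrt (det M)))"
  proof -
    have "(norm a)^2 * det M - adj_qf K h = adj_qf M a"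
      unfolding norm_vec2_sq by (simp add: adj_qf_def det_2 K M h power2_eq_square algebra_simps)
    then have "- ((norm a)^2) / 2 + adj_qf K h / (2 * det M) = - adj_qf M a / (2 * det M)"
      using det_pos by (simp add: field_simps)
    then have "exp (- ((norm a)^2) / 2) * exp (adj_qf K h / (2 * det M)) = exp (- adj_qf M a / (2 * det M))"
      by (simp add: exp_add[symmetric])
    then show ?thesis
      using det_pos by (simp add: ennreal_mult[symmetric] power2_eq_square field_simps)
  qed
  finally show ?thesis .
qed

definition iso_dens :: "real \<Rightarrow> pt \<Rightarrow> pt \<Rightarrow> real" where
  "iso_dens \<sigma> p x = exp (- ((norm (x - p)) ^ 2) / (2 * \<sigma> ^ 2)) / (2 * pi * \<sigma> ^ 2)"

lemma measurable_iso_dens[measurable]: "iso_dens \<sigma> p \<in> borel_measurable borel"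
  unfolding iso_dens_def by measurable

lemma iso_dens_nonneg: "iso_dens \<sigma> p x \<ge> 0" by (simp add: iso_dens_def)

lemma iso_dens_rescale: "iso_dens \<sigma> p (p + \<sigma> *\<^sub>R x) = std_dens x / \<sigma>^2" if "\<sigma> > 0"
proof -
  have "(norm (\<sigma> *\<^sub>R x))^2 / (2 * \<sigma>^2) = (norm x)^2 / 2" using that by (simp add: power_mult_distrib)
  then show ?thesis unfolding iso_dens_def std_dens_def by simp
qed

lemma iso_dens_rescale': "iso_dens \<sigma> q (p + \<sigma> *\<^sub>R x) = std_dens ((1/\<sigma>) *\<^sub>R (q - p) - x) / \<sigma>^2" if "\<sigma> > 0"
proof -
  have "p + \<sigma> *\<^sub>R x - q = \<sigma> *\<^sub>R (x - (1/\<sigma>) *\<^sub>R (q - p))" using that by (simp add: algebra_simps)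
  then have "(norm (p + \<sigma> *\<^sub>R x - q))^2 / (2 * \<sigma>^2) = (norm ((1/\<sigma>) *\<^sub>R (q - p) - x))^2 / 2"
    using that by (simp add: power_mult_distrib norm_minus_commute)
  then show ?thesis unfolding iso_dens_def std_dens_def by simp
qed

lemma nn_integral_iso_dens_product:
  assumes s: "\<sigma> > 0"
  shows "(\<integral>\<^sup>+x. ennreal (iso_dens \<sigma> p x * iso_dens \<sigma> q x) \<partial>lborel) = ennreal (exp (- ((norm (p - q))^2) / (4 * \<sigma>^2)) / (4 * pi * \<sigma>^2))"
proof -
  let ?L = "\<sigma> *\<^sub>R (mat 1 :: mat2)"
  let ?a = "(1/\<sigma>) *\<^sub>R (q - p)"
  have dL: "det ?L = \<sigma>^2" by (simp add: det_scaleR_mat_1)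
  have Lx: "?L *v x = \<sigma> *\<^sub>R x" for x by (simp add: vec2_eq_iff matrix_vector_mult_vec2 mat_1_mat2)
  have "(\<integral>\<^sup>+x. ennreal (iso_dens \<sigma> p x * iso_dens \<sigma> q x) \<partial>lborel) = ennreal \<bar>det ?L\<bar> * (\<integral>\<^sup>+x. ennreal (iso_dens \<sigma> p (p + ?L *v x) * iso_dens \<sigma> q (p + ?L *v x)) \<partial>lborel)"
    using s by (intro nn_integral_lborel_affine) (auto simp: dL)
  also have "\<dots> = ennreal (\<sigma>^2) * (\<integral>\<^sup>+x. ennreal (std_dens (?a - mat 1 *v x) * std_dens x) * ennreal (1 / \<sigma>^4) \<partial>lborel)"
  proof -
    have ex: "iso_dens \<sigma> p (p + ?L *v x) * iso_dens \<sigma> q (p + ?L *v x) = std_dens (?a - mat 1 *v x) * std_dens x * (1 / \<sigma>^4)" for x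
      unfolding Lx iso_dens_rescale[OF s] iso_dens_rescale'[OF s] by (simp add: field_simps power4_eq_xxxx power2_eq_square)
    have eq: "ennreal (iso_dens \<sigma> p (p + ?L *v x) * iso_dens \<sigma> q (p + ?L *v x)) = ennreal (std_dens (?a - mat 1 *v x) * std_dens x) * ennreal (1 / \<sigma>^4)" for x
      unfolding ex using std_dens_pos[of x] std_dens_pos[of "?a - mat 1 *v x"] by (intro ennreal_mult) auto
    have "(\<integral>\<^sup>+x. ennreal (iso_dens \<sigma> p (p + ?L *v x) * iso_dens \<sigma> q (p + ?L *v x)) \<partial>lborel) = (\<integral>\<^sup>+x. ennreal (std_dens (?a - mat 1 *v x) * std_dens x) * ennreal (1 / \<sigma>^4) \<partial>lborel)"
      by (rule nn_integral_cong) (rule eq)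
    then show ?thesis by (simp only: dL abs_power2)
  qed
  also have "\<dots> = ennreal (\<sigma>^2) * ((\<integral>\<^sup>+x. ennreal (std_dens (?a - mat 1 *v x) * std_dens x) \<partial>lborel) * ennreal (1 / \<sigma>^4))"
    by (simp add: nn_integral_multc)
  also have "(\<integral>\<^sup>+x. ennreal (std_dens (?a - mat 1 *v x) * std_dens x) \<partial>lborel) = ennreal (exp (- ((norm ?a)^2) / 4) / (4*pi))"
  proof -
    have M: "mat 1 + mat 1 ** transpose (mat 1) = 2 *\<^sub>R (mat 1 :: mat2)" by (simp add: mat2_eq_iff mat_1_mat2 matrix_matrix_mult_mat2 transpose_mat2)
    have "adj_qf (2 *\<^sub>R mat 1) ?a = 2 * (norm ?a)^2" unfolding adj_qf_def norm_vec2_sq by (simp add: mat_1_mat2)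
    then show ?thesis unfolding nn_integral_std_dens_product M det_scaleR_mat_1 by (simp add: field_simps)
  qed
  also have "ennreal (\<sigma>^2) * (ennreal (exp (- ((norm ?a)^2) / 4) / (4*pi)) * ennreal (1 / \<sigma>^4))
       = ennreal (exp (- ((norm (p - q))^2) / (4 * \<sigma>^2)) / (4 * pi * \<sigma>^2))"
  proof -
    have na: "(norm ?a)^2 = (norm (p - q))^2 / \<sigma>^2" using s by (simp add: power_divide norm_minus_commute)
    have "\<sigma>^2 * (exp (- ((norm ?a)^2) / 4) / (4*pi) * (1 / \<sigma>^4)) = exp (- ((norm (p - q))^2) / (4 * \<sigma>^2)) / (4 * pi * \<sigma>^2)"
      unfolding na using s by (simp add: field_simps power4_eq_xxxx power2_eq_square)
    then show ?thesis by (simp add: ennreal_mult[symmetric])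
  qed
  finally show ?thesis .
qed

lemma integral_iso_dens_product:
  assumes s: "\<sigma> > 0"
  shows "integrable lborel (\<lambda>x. iso_dens \<sigma> p x * iso_dens \<sigma> q x)"
    and "(\<integral>x. iso_dens \<sigma> p x * iso_dens \<sigma> q x \<partial>lborel) = exp (- ((norm (p - q))^2) / (4 * \<sigma>^2)) / (4 * pi * \<sigma>^2)"
  using nn_integral_eq_integrable[THEN iffD1, OF _ _ _ nn_integral_iso_dens_product[OF s, of p q]]
  by (auto simp: iso_dens_nonneg)

lemma integral_iso_dens_diff_sq:
  assumes s: "\<sigma> > 0"
  shows "(\<integral>x. (iso_dens \<sigma> p x - iso_dens \<sigma> q x)^2 \<partial>lborel) = (1 - exp (- ((norm (p - q))^2) / (4 * \<sigma>^2))) / (2 * pi * \<sigma>^2)"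
proof -
  have e: "(iso_dens \<sigma> p x - iso_dens \<sigma> q x)^2 = iso_dens \<sigma> p x * iso_dens \<sigma> p x - 2 * (iso_dens \<sigma> p x * iso_dens \<sigma> q x) + iso_dens \<sigma> q x * iso_dens \<sigma> q x" for x
    by (simp add: power2_eq_square algebra_simps)
  note I = integral_iso_dens_product[OF s]
  have "(\<integral>x. (iso_dens \<sigma> p x - iso_dens \<sigma> q x)^2 \<partial>lborel) = (\<integral>x. iso_dens \<sigma> p x * iso_dens \<sigma> p x \<partial>lborel) - 2 * (\<integral>x. iso_dens \<sigma> p x * iso_dens \<sigma> q x \<partial>lborel) + (\<integral>x. iso_dens \<sigma> q x * iso_dens \<sigma> q x \<partial>lborel)"
    unfolding e using I(1) by (simp add: integral_add integral_diff)
  also have "\<dots> = (1 - exp (- ((norm (p - q))^2) / (4 * \<sigma>^2))) / (2 * pi * \<sigma>^2)"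
    unfolding I(2) using s by (simp add: field_simps)
  finally show ?thesis .
qed

section \<open>Gaussian measures and their convolutions\<close>

lemma std_gauss_eq_density: "std_gauss = density lborel (\<lambda>x. ennreal (std_dens x))"
  by (simp add: std_gauss_def std_dens_def)

lemma prob_space_std_gauss: "prob_space std_gauss"
  by (rule prob_spaceI) (simp add: std_gauss_eq_density emeasure_density nn_integral_std_dens)

lemma prob_space_distr_std_gauss[simp]: "f \<in> borel_measurable borel \<Longrightarrow> prob_space (distr std_gauss borel f)"
  by (rule prob_space.prob_space_distr[OF prob_space_std_gauss]) (simp add: std_gauss_eq_density)

lemma nn_integral_distr_std_gauss:
  assumes [measurable]: "f \<in> borel_measurable borel" "g \<in> borel_measurable borel"
  shows "(\<integral>\<^sup>+y. g y \<partial>distr std_gauss borel f) = (\<integral>\<^sup>+x. ennreal (std_dens x) * g (f x) \<partial>lborel)"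
  by (simp add: nn_integral_distr std_gauss_eq_density nn_integral_density)

lemma emeasure_distr_std_gauss:
  assumes [measurable]: "f \<in> borel_measurable borel" and A: "A \<in> sets borel"
  shows "emeasure (distr std_gauss borel f) A = (\<integral>\<^sup>+x. ennreal (std_dens x) * indicator A (f x) \<partial>lborel)"
proof -
  have "emeasure (distr std_gauss borel f) A = emeasure std_gauss (f -` A)"
    using A by (simp add: emeasure_distr std_gauss_eq_density)
  also have "\<dots> = (\<integral>\<^sup>+x. ennreal (std_dens x) * indicator (f -` A) x \<partial>lborel)"
  proof -
    have "f -` A \<in> sets lborel" using measurable_sets[OF assms(1) A] by simp
    then show ?thesis by (simp add: std_gauss_eq_density emeasure_density)
  qed
  finally show ?thesis by (simp add: indicator_def)
qed

lemma distr_distr_std_gauss: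
  assumes [measurable]: "f \<in> borel_measurable borel" "g \<in> borel_measurable borel"
  shows "distr (distr std_gauss borel f) borel g = distr std_gauss borel (\<lambda>x. g (f x))"
proof -
  have "f \<in> measurable std_gauss borel" by (simp add: std_gauss_eq_density)
  then show ?thesis by (subst distr_distr) (auto simp: comp_def)
qed

lemma distr_std_gauss_affine:
  fixes L :: mat2 and q :: pt
  assumes d: "det L \<noteq> 0"
  shows "distr std_gauss borel (\<lambda>x. q + L *v x) = density lborel (\<lambda>y. ennreal (std_dens (inv_mat2 L *v (y - q)) / \<bar>det L\<bar>))"
proof (rule measure_eqI)
  show "sets (distr std_gauss borel (\<lambda>x. q + L *v x)) = sets (density lborel (\<lambda>y. ennreal (std_dens (inv_mat2 L *v (y - q)) / \<bar>det L\<bar>)))"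
    by simp
  fix A assume "A \<in> sets (distr std_gauss borel (\<lambda>x. q + L *v x))"
  then have A[measurable]: "A \<in> sets borel" by simp
  have "emeasure (density lborel (\<lambda>y. ennreal (std_dens (inv_mat2 L *v (y - q)) / \<bar>det L\<bar>))) A
     = (\<integral>\<^sup>+y. ennreal (std_dens (inv_mat2 L *v (y - q)) / \<bar>det L\<bar>) * indicator A y \<partial>lborel)"
    by (simp add: emeasure_density)
  also have "\<dots> = ennreal \<bar>det L\<bar> * (\<integral>\<^sup>+x. ennreal (std_dens (inv_mat2 L *v (q + L *v x - q)) / \<bar>det L\<bar>) * indicator A (q + L *v x) \<partial>lborel)"
    by (rule nn_integral_lborel_affine[OF d]) measurable
  also have "\<dots> = (\<integral>\<^sup>+x. ennreal \<bar>det L\<bar> * (ennreal (std_dens x / \<bar>det L\<bar>) * indicator A (q + L *v x)) \<partial>lborel)"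
    using matrix_mul_inv_mat2_left[OF d] by (subst nn_integral_cmult[symmetric]) (auto simp: matrix_vector_mul_assoc)
  also have "\<dots> = (\<integral>\<^sup>+x. ennreal (std_dens x) * indicator A (q + L *v x) \<partial>lborel)"
  proof (rule nn_integral_cong)
    fix x
    have "ennreal \<bar>det L\<bar> * ennreal (std_dens x / \<bar>det L\<bar>) = ennreal (std_dens x)"
      using d std_dens_pos[of x] by (subst ennreal_mult[symmetric]) auto
    then show "ennreal \<bar>det L\<bar> * (ennreal (std_dens x / \<bar>det L\<bar>) * indicator A (q + L *v x)) = ennreal (std_dens x) * indicator A (q + L *v x)"
      by (simp add: mult.assoc[symmetric])
  qed
  also have "\<dots> = emeasure (distr std_gauss borel (\<lambda>x. q + L *v x)) A"
    by (rule emeasure_distr_std_gauss[symmetric]) measurable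
  finally show "emeasure (distr std_gauss borel (\<lambda>x. q + L *v x)) A = emeasure (density lborel (\<lambda>y. ennreal (std_dens (inv_mat2 L *v (y - q)) / \<bar>det L\<bar>))) A" ..
qed

lemma isotropic_factor:
  fixes L :: mat2
  assumes C: "L ** transpose L = \<tau>^2 *\<^sub>R mat 1" and t: "\<tau> > 0"
  shows "det L \<noteq> 0" and "\<bar>det L\<bar> = \<tau>^2" and "\<And>z. std_dens (inv_mat2 L *v z) / \<bar>det L\<bar> = iso_dens \<tau> 0 z"
proof -
  have dd: "(det L)^2 = \<tau>^4" using arg_cong[OF C, of det] by (simp add: det_gram det_scaleR_mat_1 power_mult[symmetric])
  then show d: "det L \<noteq> 0" using t by auto
  show ad: "\<bar>det L\<bar> = \<tau>^2"
    by (rule power2_eq_imp_eq) (simp_all add: dd power2_abs flip: power_mult)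
  have C0: "0 ** transpose 0 + L ** transpose L = \<tau>^2 *\<^sub>R (mat 1 :: mat2)" using C by (simp add: matrix_mul_zero_left)
  have M: "mat 1 = \<tau>^2 *\<^sub>R (inv_mat2 L ** transpose (inv_mat2 L))"
    using mat_1_plus_gram_inv_mult[OF C0 d] by (simp add: matrix_mul_zero_right matrix_mul_zero_left)
  fix z :: pt
  have "(norm (inv_mat2 L *v z))^2 = \<tau>^2 * (norm z)^2 / (det L)^2"
    using scaled_inv_gram(2)[OF d, of \<tau> z] by (simp add: M[symmetric] adj_qf_mat_1)
  then have n: "(norm (inv_mat2 L *v z))^2 = (norm z)^2 / \<tau>^2"
    using t unfolding dd by (simp add: power4_eq_xxxx power2_eq_square)
  show "std_dens (inv_mat2 L *v z) / \<bar>det L\<bar> = iso_dens \<tau> 0 z"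
    unfolding std_dens_def iso_dens_def ad n by (simp add: field_simps)
qed

lemma distr_std_gauss_isotropic:
  fixes L :: mat2
  assumes C: "L ** transpose L = \<tau>^2 *\<^sub>R mat 1" and t: "\<tau> > 0"
  shows "distr std_gauss borel (\<lambda>x. q + L *v x) = density lborel (iso_dens \<tau> q)"
proof -
  have "iso_dens \<tau> q y = iso_dens \<tau> 0 (y - q)" for y by (simp add: iso_dens_def)
  then show ?thesis
    unfolding distr_std_gauss_affine[OF isotropic_factor(1)[OF C t]] isotropic_factor(3)[OF C t] by simp
qed

lemma gauss_factor: "psd M \<Longrightarrow> (SOME L::mat2. L ** transpose L = M) ** transpose (SOME L::mat2. L ** transpose L = M) = M"
  by (drule psd_factor_exists) (rule someI_ex)

lemma emeasure_conv:
  assumes sf: "sigma_finite_measure N" and [simp]: "sets M = sets borel" "sets N = sets borel" and A: "A \<in> sets borel"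
  shows "emeasure (conv M N) A = (\<integral>\<^sup>+x. \<integral>\<^sup>+y. indicator A (x + y) \<partial>N \<partial>M)"
proof -
  have m: "(\<lambda>(x, y). x + y) \<in> measurable (M \<Otimes>\<^sub>M N) (borel :: pt measure)"
    by (simp add: measurable_cong_sets[OF sets_pair_measure_cong[OF assms(2,3)] refl] borel_prod[symmetric])
  have "emeasure (conv M N) A = emeasure (M \<Otimes>\<^sub>M N) ((\<lambda>(x, y). x + y) -` A \<inter> space (M \<Otimes>\<^sub>M N))"
    unfolding conv_def using A m by (simp add: emeasure_distr)
  also have "\<dots> = (\<integral>\<^sup>+z. indicator A (case z of (x,y) \<Rightarrow> x + y) \<partial>(M \<Otimes>\<^sub>M N))"
  proof -
    have sp: "space M = UNIV" "space N = UNIV"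
      using sets_eq_imp_space_eq[OF assms(2)] sets_eq_imp_space_eq[OF assms(3)] by auto
    have S: "(\<lambda>(x, y). x + y) -` A \<inter> space (M \<Otimes>\<^sub>M N) \<in> sets (M \<Otimes>\<^sub>M N)"
      using measurable_sets[OF m A] .
    show ?thesis
      unfolding nn_integral_indicator[OF S, symmetric]
      by (rule nn_integral_cong) (simp add: indicator_def space_pair_measure sp split: prod.splits)
  qed
  also have "\<dots> = (\<integral>\<^sup>+x. \<integral>\<^sup>+y. indicator A (x + y) \<partial>N \<partial>M)"
  proof -
    interpret N: sigma_finite_measure N by fact
    have "(\<lambda>z. indicator A (case z of (x,y) \<Rightarrow> x + y) :: ennreal) \<in> borel_measurable (M \<Otimes>\<^sub>M N)"
      using m A by measurable
    from N.nn_integral_fst[OF this] show ?thesis by simp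
  qed
  finally show ?thesis .
qed

lemma conv_dirac:
  assumes G: "sets G = sets borel"
  shows "conv G (dirac u) = distr G borel (\<lambda>x. x + u)"
proof (rule measure_eqI)
  show "sets (conv G (dirac u)) = sets (distr G borel (\<lambda>x. x + u))" by (simp add: conv_def)
  fix A assume "A \<in> sets (conv G (dirac u))"
  then have A: "A \<in> sets borel" by (simp add: conv_def)
  have mG: "(\<lambda>x. x + u) \<in> measurable G borel"
    by (subst measurable_cong_sets[OF G refl]) simp
  have sf: "sigma_finite_measure (dirac u)"
    unfolding dirac_def by (rule prob_space_imp_sigma_finite) (rule prob_space_return, simp)
  have sd: "sets (dirac u) = sets borel" by (simp add: dirac_def)
  have "emeasure (conv G (dirac u)) A = (\<integral>\<^sup>+x. \<integral>\<^sup>+y. indicator A (x + y) \<partial>dirac u \<partial>G)"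
    by (rule emeasure_conv[OF sf G sd A])
  also have "\<dots> = (\<integral>\<^sup>+x. indicator A (x + u) \<partial>G)"
  proof (rule nn_integral_cong)
    fix x
    have "(\<lambda>y. indicator A (x + y) :: ennreal) \<in> borel_measurable borel"
      using A by measurable
    then show "(\<integral>\<^sup>+y. indicator A (x + y) \<partial>dirac u) = indicator A (x + u)"
      unfolding dirac_def by (rule nn_integral_return[rotated]) simp
  qed
  also have "\<dots> = (\<integral>\<^sup>+x. indicator A x \<partial>distr G borel (\<lambda>x. x + u))"
    using A by (subst nn_integral_distr[OF mG]) auto
  also have "\<dots> = emeasure (distr G borel (\<lambda>x. x + u)) A"
    using A by (subst nn_integral_indicator) auto
  finally show "emeasure (conv G (dirac u)) A = emeasure (distr G borel (\<lambda>x. x + u)) A" .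
qed

lemma conv_distr_std_gauss_dirac:
  "conv (distr std_gauss borel (\<lambda>x. q + L *v x)) (dirac u) = distr std_gauss borel (\<lambda>x. (q + u) + L *v x)"
proof -
  have "conv (distr std_gauss borel (\<lambda>x. q + L *v x)) (dirac u) = distr (distr std_gauss borel (\<lambda>x. q + L *v x)) borel (\<lambda>x. x + u)"
    by (rule conv_dirac) simp
  also have "\<dots> = distr std_gauss borel (\<lambda>x. q + L *v x + u)"
    by (rule distr_distr_std_gauss) measurable
  finally show ?thesis by (simp add: algebra_simps)
qed

lemma nn_integral_std_dens_conv_affine:
  fixes L1 L2 :: mat2 and q1 q2 :: pt
  assumes C: "L1 ** transpose L1 + L2 ** transpose L2 = \<tau>^2 *\<^sub>R mat 1" and t: "\<tau> > 0" and d: "det L2 \<noteq> 0"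
  shows "(\<integral>\<^sup>+x. ennreal (std_dens x * (std_dens (inv_mat2 L2 *v (w - (q1 + L1 *v x) - q2)) / \<bar>det L2\<bar>)) \<partial>lborel)
         = ennreal (iso_dens \<tau> (q1 + q2) w)"
proof -
  let ?Li = "inv_mat2 L2" let ?B = "inv_mat2 L2 ** L1" let ?a = "inv_mat2 L2 *v (w - (q1 + q2))"
  let ?M = "mat 1 + ?B ** transpose ?B"
  have shift: "?Li *v (w - (q1 + L1 *v x) - q2) = ?a - ?B *v x" for x
  proof -
    have "w - (q1 + L1 *v x) - q2 = (w - (q1 + q2)) - L1 *v x" by (simp add: algebra_simps)
    then show ?thesis by (simp only: matrix_vector_mult_diff_distrib matrix_vector_mul_assoc)
  qed
  have M: "?M = \<tau>^2 *\<^sub>R (?Li ** transpose ?Li)" by (rule mat_1_plus_gram_inv_mult[OF C d])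
  have dM: "det ?M = \<tau>^4 / (det L2)^2" unfolding M by (rule scaled_inv_gram(1)[OF d])
  have qM: "adj_qf ?M ?a = \<tau>^2 * (norm (w - (q1 + q2)))^2 / (det L2)^2" unfolding M by (rule scaled_inv_gram(2)[OF d])
  have sq: "sqrt (\<tau>^4 / (det L2)^2) = \<tau>^2 / \<bar>det L2\<bar>"
    using real_sqrt_abs[of "\<tau>^2"] by (simp add: power_mult[symmetric] real_sqrt_divide)
  have "adj_qf ?M ?a / (2 * det ?M) = (norm (w - (q1 + q2)))^2 / (2 * \<tau>^2)"
    unfolding dM qM using d t by (simp add: field_simps power_mult[symmetric] power2_eq_square power4_eq_xxxx)
  then have ex: "- adj_qf ?M ?a / (2 * det ?M) = - ((norm (w - (q1 + q2)))^2) / (2 * \<tau>^2)"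
    by (simp add: minus_divide_left[symmetric])
  have "(\<integral>\<^sup>+x. ennreal (std_dens x * (std_dens (?Li *v (w - (q1 + L1 *v x) - q2)) / \<bar>det L2\<bar>)) \<partial>lborel)
      = (\<integral>\<^sup>+x. ennreal (std_dens (?a - ?B *v x) * std_dens x) * ennreal (1 / \<bar>det L2\<bar>) \<partial>lborel)"
  proof (rule nn_integral_cong)
    fix x
    show "ennreal (std_dens x * (std_dens (?Li *v (w - (q1 + L1 *v x) - q2)) / \<bar>det L2\<bar>))
        = ennreal (std_dens (?a - ?B *v x) * std_dens x) * ennreal (1 / \<bar>det L2\<bar>)"
      unfolding shift using std_dens_pos[of x] std_dens_pos[of "?a - ?B *v x"]
      by (simp add: ennreal_mult[symmetric] field_simps)
  qed
  also have "\<dots> = (\<integral>\<^sup>+x. ennreal (std_dens (?a - ?B *v x) * std_dens x) \<partial>lborel) * ennreal (1 / \<bar>det L2\<bar>)"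
    by (rule nn_integral_multc) measurable
  also have "(\<integral>\<^sup>+x. ennreal (std_dens (?a - ?B *v x) * std_dens x) \<partial>lborel) = ennreal (iso_dens \<tau> (q1 + q2) w * \<bar>det L2\<bar>)"
    unfolding nn_integral_std_dens_product ex unfolding dM sq using d t by (simp add: iso_dens_def field_simps)
  also have "ennreal (iso_dens \<tau> (q1 + q2) w * \<bar>det L2\<bar>) * ennreal (1 / \<bar>det L2\<bar>) = ennreal (iso_dens \<tau> (q1 + q2) w)"
    using d by (subst ennreal_mult''[symmetric]) simp_all
  finally show ?thesis .
qed

lemma conv_distr_std_gauss:
  fixes L1 L2 :: mat2 and q1 q2 :: pt
  assumes C: "L1 ** transpose L1 + L2 ** transpose L2 = \<tau>^2 *\<^sub>R mat 1" and t: "\<tau> > 0" and d: "det L2 \<noteq> 0"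
  shows "conv (distr std_gauss borel (\<lambda>x. q1 + L1 *v x)) (distr std_gauss borel (\<lambda>y. q2 + L2 *v y))
         = density lborel (iso_dens \<tau> (q1 + q2))"
proof (rule measure_eqI)
  let ?\<mu> = "distr std_gauss borel (\<lambda>x. q1 + L1 *v x)" and ?\<nu> = "distr std_gauss borel (\<lambda>y. q2 + L2 *v y)"
  show "sets (conv ?\<mu> ?\<nu>) = sets (density lborel (iso_dens \<tau> (q1 + q2)))" by (simp add: conv_def)
  fix A assume "A \<in> sets (conv ?\<mu> ?\<nu>)"
  then have A[measurable]: "A \<in> sets borel" by (simp add: conv_def)
  define \<rho> where "\<rho> y = std_dens (inv_mat2 L2 *v (y - q2)) / \<bar>det L2\<bar>" for y
  have [measurable]: "\<rho> \<in> borel_measurable borel" unfolding \<rho>_def by measurable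
  have \<nu>: "?\<nu> = density lborel (\<lambda>y. ennreal (\<rho> y))"
    unfolding \<rho>_def by (rule distr_std_gauss_affine[OF d])
  have "sigma_finite_measure ?\<nu>"
    by (rule prob_space_imp_sigma_finite[OF prob_space_distr_std_gauss]) measurable
  then have "emeasure (conv ?\<mu> ?\<nu>) A = (\<integral>\<^sup>+x. \<integral>\<^sup>+y. indicator A (x + y) \<partial>?\<nu> \<partial>?\<mu>)"
    by (rule emeasure_conv) auto
  also have "\<dots> = (\<integral>\<^sup>+x. ennreal (std_dens x) * (\<integral>\<^sup>+y. ennreal (\<rho> y) * indicator A (q1 + L1 *v x + y) \<partial>lborel) \<partial>lborel)"
    unfolding \<nu> by (simp add: nn_integral_density nn_integral_distr_std_gauss)
  also have "\<dots> = (\<integral>\<^sup>+x. ennreal (std_dens x) * (\<integral>\<^sup>+w. ennreal (\<rho> (w - (q1 + L1 *v x))) * indicator A w \<partial>lborel) \<partial>lborel)"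
  proof (rule nn_integral_cong)
    fix x
    have "(\<integral>\<^sup>+y. ennreal (\<rho> y) * indicator A (q1 + L1 *v x + y) \<partial>lborel)
        = (\<integral>\<^sup>+w. ennreal (\<rho> (w - (q1 + L1 *v x))) * indicator A w \<partial>lborel)"
      using nn_integral_lborel_translate[of "\<lambda>w. ennreal (\<rho> (w - (q1 + L1 *v x))) * indicator A w" "q1 + L1 *v x"]
      by simp
    then show "ennreal (std_dens x) * (\<integral>\<^sup>+y. ennreal (\<rho> y) * indicator A (q1 + L1 *v x + y) \<partial>lborel)
        = ennreal (std_dens x) * (\<integral>\<^sup>+w. ennreal (\<rho> (w - (q1 + L1 *v x))) * indicator A w \<partial>lborel)"
      by simp
  qed
  also have "\<dots> = (\<integral>\<^sup>+w. \<integral>\<^sup>+x. ennreal (std_dens x) * (ennreal (\<rho> (w - (q1 + L1 *v x))) * indicator A w) \<partial>lborel \<partial>lborel)"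
    by (simp add: nn_integral_cmult lborel_pair.Fubini'[symmetric])
  also have "\<dots> = (\<integral>\<^sup>+w. ennreal (iso_dens \<tau> (q1 + q2) w) * indicator A w \<partial>lborel)"
  proof (rule nn_integral_cong)
    fix w
    have "(\<integral>\<^sup>+x. ennreal (std_dens x) * (ennreal (\<rho> (w - (q1 + L1 *v x))) * indicator A w) \<partial>lborel)
        = (\<integral>\<^sup>+x. ennreal (std_dens x * \<rho> (w - (q1 + L1 *v x))) * indicator A w \<partial>lborel)"
      by (intro nn_integral_cong) (simp add: ennreal_mult' less_imp_le[OF std_dens_pos] mult.assoc)
    also have "\<dots> = (\<integral>\<^sup>+x. ennreal (std_dens x * \<rho> (w - (q1 + L1 *v x))) \<partial>lborel) * indicator A w"
      by (rule nn_integral_multc) measurable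
    finally show "(\<integral>\<^sup>+x. ennreal (std_dens x) * (ennreal (\<rho> (w - (q1 + L1 *v x))) * indicator A w) \<partial>lborel)
        = ennreal (iso_dens \<tau> (q1 + q2) w) * indicator A w"
      unfolding \<rho>_def nn_integral_std_dens_conv_affine[OF C t d] .
  qed
  also have "\<dots> = emeasure (density lborel (iso_dens \<tau> (q1 + q2))) A"
    by (simp add: emeasure_density)
  finally show "emeasure (conv ?\<mu> ?\<nu>) A = emeasure (density lborel (iso_dens \<tau> (q1 + q2))) A" .
qed

lemma conv_gauss_dirac:
  assumes s: "\<sigma> > 0"
  shows "conv (gauss 0 (\<sigma>^2 *\<^sub>R mat 1)) (dirac v) = density lborel (iso_dens \<sigma> v)"
proof -
  let ?L = "SOME L::mat2. L ** transpose L = \<sigma>^2 *\<^sub>R mat 1"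
  have L: "?L ** transpose ?L = \<sigma>^2 *\<^sub>R mat 1" by (rule gauss_factor[OF psd_scaleR_mat_1]) simp
  show ?thesis unfolding gauss_def conv_distr_std_gauss_dirac using distr_std_gauss_isotropic[OF L s] by simp
qed

text \<open>The normalisation \<open>det\<^sup>1\<^sup>/\<^sup>2(A\<^sup>* A)\<close> in \<open>phi_L2\<close> exactly cancels the Jacobian factor of
  \<open>comp_tau\<close>, so the warped blurred Dirac is again a probability measure: a Gaussian with factor \<open>A L\<close>.\<close>
lemma warped_blurred_dirac:
  fixes A L :: mat2 and b u :: pt
  assumes dA: "det A \<noteq> 0"
  shows "scale_measure (ennreal (sqrt (det (transpose (matrix_inv A) ** matrix_inv A))))
     (scale_measure (ennreal (1 / \<bar>det (matrix_inv A)\<bar>))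
        (distr (conv (distr std_gauss borel (\<lambda>x. 0 + L *v x)) (dirac u)) borel
           (\<lambda>y. matrix_inv (matrix_inv A) *v (y - - (matrix_inv A *v b)))))
   = distr std_gauss borel (\<lambda>x. (A *v u + b) + (A ** L) *v x)"
proof -
  let ?Ai = "inv_mat2 A"
  have dAi: "det ?Ai \<noteq> 0" using det_inv_mat2[OF dA] dA by simp
  have scale: "ennreal (sqrt (det (transpose ?Ai ** ?Ai))) * ennreal (1 / \<bar>det ?Ai\<bar>) = 1"
    using dAi by (simp add: det_mul det_transpose real_sqrt_mult ennreal_mult[symmetric])
  have "distr (conv (distr std_gauss borel (\<lambda>x. 0 + L *v x)) (dirac u)) borel (\<lambda>y. A *v (y - - (?Ai *v b)))
        = distr std_gauss borel (\<lambda>x. A *v ((0 + u) + L *v x - - (?Ai *v b)))"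
    unfolding conv_distr_std_gauss_dirac by (rule distr_distr_std_gauss) measurable
  also have "(\<lambda>x. A *v ((0 + u) + L *v x - - (?Ai *v b))) = (\<lambda>x. (A *v u + b) + (A ** L) *v x)"
    using matrix_mul_inv_mat2_right[OF dA]
    by (simp add: matrix_vector_right_distrib matrix_vector_mul_assoc algebra_simps)
  finally show ?thesis
    unfolding matrix_inv_matrix_inv_mat2[OF dA]
    unfolding matrix_inv_eq_inv_mat2[OF dA] scale_scale_measure scale scale_measure_1 .
qed

lemma conv_distr_std_gauss_complementary:
  fixes A L0 L1 :: mat2
  assumes s: "\<sigma> > 0" and s0: "\<sigma>0 \<ge> 0" and dA: "det A \<noteq> 0"
    and L0: "L0 ** transpose L0 = \<sigma>0^2 *\<^sub>R mat 1"
    and L1: "L1 ** transpose L1 = \<sigma>^2 *\<^sub>R mat 1 - \<sigma>0^2 *\<^sub>R (A ** transpose A)"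
  shows "conv (distr std_gauss borel (\<lambda>x. 0 + L1 *v x)) (distr std_gauss borel (\<lambda>x. p + (A ** L0) *v x))
         = density lborel (iso_dens \<sigma> p)"
proof (cases "\<sigma>0 = 0")
  case False
  have C: "L1 ** transpose L1 + (A ** L0) ** transpose (A ** L0) = \<sigma>^2 *\<^sub>R mat 1"
    unfolding L1 gram_mult_isotropic[OF L0] by simp
  have "det L0 \<noteq> 0" using False s0 by (intro isotropic_factor(1)[OF L0]) simp
  then have "det (A ** L0) \<noteq> 0" using dA by (simp add: det_mul)
  then show ?thesis using conv_distr_std_gauss[OF C s, of 0 p] by simp
next
  case True
  have "(L0$1$1)^2 + (L0$1$2)^2 = 0" "(L0$2$1)^2 + (L0$2$2)^2 = 0"
    using arg_cong[OF L0, of "\<lambda>X. X$1$1"] arg_cong[OF L0, of "\<lambda>X. X$2$2"] True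
    by (simp_all add: matrix_matrix_mult_mat2 transpose_mat2 power2_eq_square)
  then have "A ** L0 = 0" by (simp add: mat2_eq_iff matrix_matrix_mult_mat2 sum_power2_eq_zero_iff)
  then have "distr std_gauss borel (\<lambda>x. p + (A ** L0) *v x) = dirac p"
    unfolding dirac_def using prob_space.distr_const[OF prob_space_std_gauss, of p borel] by simp
  moreover have "L1 ** transpose L1 = \<sigma>^2 *\<^sub>R mat 1" using L1 True by simp
  ultimately show ?thesis
    using conv_distr_std_gauss_dirac[of 0 L1 p] distr_std_gauss_isotropic[OF _ s] by simp
qed

lemma conv_gauss_warped_dirac:
  fixes A :: mat2 and b u :: pt
  assumes dA: "det A \<noteq> 0" and s: "\<sigma> > 0" and s0: "\<sigma>0 \<ge> 0"
    and P: "psd (\<sigma>^2 *\<^sub>R mat 1 - \<sigma>0^2 *\<^sub>R (A ** transpose A))"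
  shows "conv (gauss 0 (\<sigma>^2 *\<^sub>R mat 1 - \<sigma>0^2 *\<^sub>R matrix_inv (transpose (matrix_inv A) ** matrix_inv A)))
   (scale_measure (ennreal (sqrt (det (transpose (matrix_inv A) ** matrix_inv A))))
     (scale_measure (ennreal (1 / \<bar>det (matrix_inv A)\<bar>))
        (distr (conv (gauss 0 (\<sigma>0^2 *\<^sub>R mat 1)) (dirac u)) borel (\<lambda>y. matrix_inv (matrix_inv A) *v (y - - (matrix_inv A *v b))))))
  = density lborel (iso_dens \<sigma> (A *v u + b))"
proof -
  let ?L0 = "SOME L::mat2. L ** transpose L = \<sigma>0^2 *\<^sub>R mat 1"
  let ?L1 = "SOME L::mat2. L ** transpose L = \<sigma>^2 *\<^sub>R mat 1 - \<sigma>0^2 *\<^sub>R (A ** transpose A)"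
  have L0: "?L0 ** transpose ?L0 = \<sigma>0^2 *\<^sub>R mat 1" by (rule gauss_factor[OF psd_scaleR_mat_1]) simp
  have L1: "?L1 ** transpose ?L1 = \<sigma>^2 *\<^sub>R mat 1 - \<sigma>0^2 *\<^sub>R (A ** transpose A)" by (rule gauss_factor[OF P])
  show ?thesis
    unfolding matrix_inv_gram_matrix_inv[OF dA] gauss_def warped_blurred_dirac[OF dA]
    by (rule conv_distr_std_gauss_complementary[OF s s0 dA L0 L1])
qed

section \<open>The objective in closed form\<close>

lemma AE_dens_density:
  assumes [measurable]: "f \<in> borel_measurable borel" and nn: "\<And>x. f x \<ge> 0"
  shows "AE x in lborel. dens (density lborel (\<lambda>x. ennreal (f x))) x = f x"
proof -
  have "AE x in lborel. ennreal (f x) = RN_deriv lborel (density lborel (\<lambda>x. ennreal (f x))) x"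
    by (rule sigma_finite_measure.RN_deriv_unique[OF sigma_finite_lborel]) auto
  then show ?thesis
    by eventually_elim (metis dens_def enn2real_ennreal nn)
qed

lemma measurable_dens[measurable]: "dens \<mu> \<in> borel_measurable borel"
proof -
  have "RN_deriv lborel \<mu> \<in> borel_measurable lborel" by (rule borel_measurable_RN_deriv)
  then have [measurable]: "RN_deriv lborel \<mu> \<in> borel_measurable borel" by simp
  show ?thesis unfolding dens_def[abs_def] by measurable
qed

lemma integral_dens_iso_diff_sq:
  assumes s: "\<sigma> > 0"
  shows "(\<integral>x. (dens (density lborel (iso_dens \<sigma> p)) x - dens (density lborel (iso_dens \<sigma> q)) x)^2 \<partial>lborel)
      = (1 - exp (- ((norm (p - q))^2) / (4 * \<sigma>^2))) / (2 * pi * \<sigma>^2)"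
proof -
  have "AE x in lborel. (dens (density lborel (iso_dens \<sigma> p)) x - dens (density lborel (iso_dens \<sigma> q)) x)^2 = (iso_dens \<sigma> p x - iso_dens \<sigma> q x)^2"
    using AE_dens_density[OF measurable_iso_dens iso_dens_nonneg, of \<sigma> p] AE_dens_density[OF measurable_iso_dens iso_dens_nonneg, of \<sigma> q] by eventually_elim simp
  then show ?thesis by (subst integral_cong_AE[where g="\<lambda>x. (iso_dens \<sigma> p x - iso_dens \<sigma> q x)^2"]) (auto simp: integral_iso_dens_diff_sq[OF s])
qed

definition overlap_loss :: "nat \<Rightarrow> (nat \<Rightarrow> pt) \<Rightarrow> (nat \<Rightarrow> pt) \<Rightarrow> real \<Rightarrow> mat2 \<Rightarrow> pt \<Rightarrow> real" where
  "overlap_loss c u v \<sigma> A b = 1 / (2 * real c) * (\<Sum>i=1..c. (1 - exp (- ((norm (A *v u i + b - v i))^2) / (4 * \<sigma>^2))) / (2 * pi * \<sigma>^2))"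

lemma phi_inv_eq_overlap_loss:
  assumes dA: "det A \<noteq> 0" and s: "\<sigma> > 0" and s0: "\<sigma>0 \<ge> 0"
    and P: "psd (\<sigma>^2 *\<^sub>R mat 1 - \<sigma>0^2 *\<^sub>R (A ** transpose A))"
  shows "phi_inv c u v \<sigma> \<sigma>0 A b = overlap_loss c u v \<sigma> A b"
  unfolding phi_inv_def phi_L2_def l2_dist_sq_def conv_sig_def scale_sig_def comp_tau_def dirac_sig_def overlap_loss_def
  unfolding conv_gauss_warped_dirac[OF dA s s0 P] conv_gauss_dirac[OF s] integral_dens_iso_diff_sq[OF s] ..

section \<open>Gradients\<close>

definition outer :: "pt \<Rightarrow> pt \<Rightarrow> mat2" where
  "outer r u = (\<chi> i j. r$i * u$j)"

lemma outer_components: "outer r u $ i $ j = r$i * u$j" by (simp add: outer_def)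

lemma inner_matrix_vector_outer: "r \<bullet> (H *v u) = H \<bullet> outer r u"
  by (simp add: inner_vec_def sum_2 matrix_vector_mult_vec2 outer_components algebra_simps)

lemma bounded_linear_matrix_vector_left: "bounded_linear (\<lambda>A::mat2. A *v u)"
proof -
  have "linear (\<lambda>A::mat2. A *v u)"
    by (rule linearI) (simp_all add: matrix_vector_mult_add_rdistrib vec2_eq_iff matrix_vector_mult_vec2 algebra_simps)
  then show ?thesis by (simp add: linear_conv_bounded_linear)
qed

lemma some_gderiv_eq:
  assumes "GDERIV f x :> D"
  shows "(SOME G. GDERIV f x :> G) = D"
proof -
  define G where "G = (SOME G. GDERIV f x :> G)"
  have "GDERIV f x :> G" unfolding G_def using assms by (rule someI)
  then have "(\<lambda>h. h \<bullet> G) = (\<lambda>h. h \<bullet> D)" using assms unfolding gderiv_def by (rule has_derivative_unique)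
  then have "(G - D) \<bullet> G = (G - D) \<bullet> D" by metis
  then have "(G - D) \<bullet> (G - D) = 0" by (simp add: inner_diff_right)
  then show ?thesis unfolding G_def[symmetric] by simp
qed

lemma has_derivative_overlap_term:
  fixes g :: "'a::real_normed_vector \<Rightarrow> pt"
  assumes g: "(g has_derivative g') (at x)" and s: "\<sigma> > 0"
  shows "((\<lambda>x. (1 - exp (- ((norm (g x))^2) / (4 * \<sigma>^2))) / (2 * pi * \<sigma>^2)) has_derivative
          (\<lambda>h. exp (- ((norm (g x))^2) / (4 * \<sigma>^2)) / (4 * pi * \<sigma>^4) * (g x \<bullet> g' h))) (at x)"
proof -
  define \<phi> where "\<phi> t = (1 - exp (- t / (4 * \<sigma>^2))) / (2 * pi * \<sigma>^2)" for t
  have d\<phi>: "(\<phi> has_real_derivative exp (- t / (4 * \<sigma>^2)) / (8 * pi * \<sigma>^4)) (at t)" for t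
    unfolding \<phi>_def
    using s by (auto intro!: derivative_eq_intros simp: field_simps power4_eq_xxxx power2_eq_square)
  have t: "((\<lambda>x. g x \<bullet> g x) has_derivative (\<lambda>h. g x \<bullet> g' h + g' h \<bullet> g x)) (at x)"
    by (rule has_derivative_inner[OF g g])
  have c: "((\<lambda>x. \<phi> (g x \<bullet> g x)) has_derivative (\<lambda>h. (g x \<bullet> g' h + g' h \<bullet> g x) * (exp (- (g x \<bullet> g x) / (4 * \<sigma>^2)) / (8 * pi * \<sigma>^4)))) (at x)"
    by (rule has_derivative_eq_rhs[OF has_derivative_compose[OF t d\<phi>[unfolded has_field_derivative_def]]]) (simp add: mult.commute)
  have e: "(norm (g y))^2 = g y \<bullet> g y" for y by (simp add: power2_norm_eq_inner)
  show ?thesis unfolding e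
    by (rule has_derivative_eq_rhs[OF c[unfolded \<phi>_def]])
      (use s in \<open>auto intro!: ext simp: inner_commute field_simps power4_eq_xxxx power2_eq_square\<close>)
qed

definition overlap_grad_b :: "nat \<Rightarrow> (nat \<Rightarrow> pt) \<Rightarrow> (nat \<Rightarrow> pt) \<Rightarrow> real \<Rightarrow> mat2 \<Rightarrow> pt \<Rightarrow> pt" where
  "overlap_grad_b c u v \<sigma> A b = (1 / (8 * pi * \<sigma>^4 * real c)) *\<^sub>R
     (\<Sum>i=1..c. exp (- ((norm (A *v u i + b - v i))^2) / (4 * \<sigma>^2)) *\<^sub>R (A *v u i + b - v i))"

definition overlap_grad_A :: "nat \<Rightarrow> (nat \<Rightarrow> pt) \<Rightarrow> (nat \<Rightarrow> pt) \<Rightarrow> real \<Rightarrow> mat2 \<Rightarrow> pt \<Rightarrow> mat2" where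
  "overlap_grad_A c u v \<sigma> A b = (1 / (8 * pi * \<sigma>^4 * real c)) *\<^sub>R
     (\<Sum>i=1..c. exp (- ((norm (A *v u i + b - v i))^2) / (4 * \<sigma>^2)) *\<^sub>R outer (A *v u i + b - v i) (u i))"

lemma overlap_loss_gderiv_b:
  assumes s: "\<sigma> > 0" and c: "c > 0"
  shows "GDERIV (\<lambda>b. overlap_loss c u v \<sigma> A b) b :> overlap_grad_b c u v \<sigma> A b"
proof -
  have t: "((\<lambda>b. (1 - exp (- ((norm (A *v u i + b - v i))^2) / (4 * \<sigma>^2))) / (2 * pi * \<sigma>^2)) has_derivative
          (\<lambda>h. exp (- ((norm (A *v u i + b - v i))^2) / (4 * \<sigma>^2)) / (4 * pi * \<sigma>^4) * ((A *v u i + b - v i) \<bullet> h))) (at b)" for i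
  proof -
    have g: "((\<lambda>b. A *v u i + b - v i) has_derivative (\<lambda>h. h)) (at b)"
      by (rule has_derivative_eq_rhs[OF has_derivative_diff[OF has_derivative_add[OF has_derivative_const has_derivative_ident] has_derivative_const]]) simp
    from has_derivative_overlap_term[OF g s] show ?thesis .
  qed
  have "((\<lambda>b. overlap_loss c u v \<sigma> A b) has_derivative (\<lambda>h. 1 / (2 * real c) *
      (\<Sum>i=1..c. exp (- ((norm (A *v u i + b - v i))^2) / (4 * \<sigma>^2)) / (4 * pi * \<sigma>^4) * ((A *v u i + b - v i) \<bullet> h)))) (at b)"
    unfolding overlap_loss_def by (intro has_derivative_mult_right has_derivative_sum t)
  moreover have "(\<lambda>h. 1 / (2 * real c) *
      (\<Sum>i=1..c. exp (- ((norm (A *v u i + b - v i))^2) / (4 * \<sigma>^2)) / (4 * pi * \<sigma>^4) * ((A *v u i + b - v i) \<bullet> h)))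
     = (\<lambda>h. h \<bullet> overlap_grad_b c u v \<sigma> A b)"
  proof (rule ext)
    fix h
    have "h \<bullet> overlap_grad_b c u v \<sigma> A b = (\<Sum>i=1..c. 1 / (8 * pi * \<sigma>^4 * real c) * (exp (- ((norm (A *v u i + b - v i))^2) / (4 * \<sigma>^2)) * (h \<bullet> (A *v u i + b - v i))))"
      by (simp add: overlap_grad_b_def inner_sum_right sum_distrib_left)
    also have "\<dots> = 1 / (2 * real c) * (\<Sum>i=1..c. exp (- ((norm (A *v u i + b - v i))^2) / (4 * \<sigma>^2)) / (4 * pi * \<sigma>^4) * ((A *v u i + b - v i) \<bullet> h))"
      unfolding sum_distrib_left using c by (intro sum.cong refl) (simp add: inner_commute field_simps)
    finally show "1 / (2 * real c) * (\<Sum>i=1..c. exp (- ((norm (A *v u i + b - v i))^2) / (4 * \<sigma>^2)) / (4 * pi * \<sigma>^4) * ((A *v u i + b - v i) \<bullet> h)) = h \<bullet> overlap_grad_b c u v \<sigma> A b" by simp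
  qed
  ultimately show ?thesis unfolding gderiv_def by simp
qed

lemma overlap_loss_gderiv_A:
  assumes s: "\<sigma> > 0" and c: "c > 0"
  shows "GDERIV (\<lambda>A. overlap_loss c u v \<sigma> A b) A :> overlap_grad_A c u v \<sigma> A b"
proof -
  have t: "((\<lambda>A. (1 - exp (- ((norm (A *v u i + b - v i))^2) / (4 * \<sigma>^2))) / (2 * pi * \<sigma>^2)) has_derivative
          (\<lambda>h. exp (- ((norm (A *v u i + b - v i))^2) / (4 * \<sigma>^2)) / (4 * pi * \<sigma>^4) * ((A *v u i + b - v i) \<bullet> (h *v u i)))) (at A)" for i
  proof -
    have "((\<lambda>A::mat2. A *v u i + b - v i) has_derivative (\<lambda>h. h *v u i)) (at A)"
      by (rule has_derivative_eq_rhs[OF has_derivative_diff[OF has_derivative_add[OF bounded_linear.has_derivative[OF bounded_linear_matrix_vector_left has_derivative_ident] has_derivative_const] has_derivative_const]]) simp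
    from has_derivative_overlap_term[OF this s] show ?thesis .
  qed
  have "((\<lambda>A. overlap_loss c u v \<sigma> A b) has_derivative (\<lambda>h. 1 / (2 * real c) *
      (\<Sum>i=1..c. exp (- ((norm (A *v u i + b - v i))^2) / (4 * \<sigma>^2)) / (4 * pi * \<sigma>^4) * ((A *v u i + b - v i) \<bullet> (h *v u i))))) (at A)"
    unfolding overlap_loss_def by (intro has_derivative_mult_right has_derivative_sum t)
  moreover have "(\<lambda>h. 1 / (2 * real c) *
      (\<Sum>i=1..c. exp (- ((norm (A *v u i + b - v i))^2) / (4 * \<sigma>^2)) / (4 * pi * \<sigma>^4) * ((A *v u i + b - v i) \<bullet> (h *v u i))))
     = (\<lambda>h. h \<bullet> overlap_grad_A c u v \<sigma> A b)"
  proof (rule ext)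
    fix h
    have "h \<bullet> overlap_grad_A c u v \<sigma> A b = (\<Sum>i=1..c. 1 / (8 * pi * \<sigma>^4 * real c) * (exp (- ((norm (A *v u i + b - v i))^2) / (4 * \<sigma>^2)) * (h \<bullet> outer (A *v u i + b - v i) (u i))))"
      by (simp add: overlap_grad_A_def inner_sum_right sum_distrib_left)
    also have "\<dots> = 1 / (2 * real c) * (\<Sum>i=1..c. exp (- ((norm (A *v u i + b - v i))^2) / (4 * \<sigma>^2)) / (4 * pi * \<sigma>^4) * ((A *v u i + b - v i) \<bullet> (h *v u i)))"
      unfolding sum_distrib_left inner_matrix_vector_outer using c by (intro sum.cong refl) (simp add: field_simps)
    finally show "1 / (2 * real c) * (\<Sum>i=1..c. exp (- ((norm (A *v u i + b - v i))^2) / (4 * \<sigma>^2)) / (4 * pi * \<sigma>^4) * ((A *v u i + b - v i) \<bullet> (h *v u i))) = h \<bullet> overlap_grad_A c u v \<sigma> A b" by simp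
  qed
  ultimately show ?thesis unfolding gderiv_def by simp
qed

lemma grad_phi_inv_eq_overlap_grad:
  assumes "\<sigma> > 0" "\<sigma>0 \<ge> 0" "c > 0" and N: "open N" "A \<in> N"
    and well_defined: "\<forall>A'\<in>N. invertible A' \<and> psd (\<sigma>^2 *\<^sub>R mat 1 - \<sigma>0^2 *\<^sub>R (A' ** transpose A'))"
  shows "grad_A (phi_inv c u v \<sigma> \<sigma>0) A b = overlap_grad_A c u v \<sigma> A b"
    and "grad_b (phi_inv c u v \<sigma> \<sigma>0) A b = overlap_grad_b c u v \<sigma> A b"
proof -
  have phi_inv_eq: "phi_inv c u v \<sigma> \<sigma>0 A' b' = overlap_loss c u v \<sigma> A' b'" if "A' \<in> N" for A' b'
    using well_defined that assms(1,2) by (intro phi_inv_eq_overlap_loss) (auto simp: invertible_det_nz)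
  have "GDERIV (\<lambda>A'. phi_inv c u v \<sigma> \<sigma>0 A' b) A :> overlap_grad_A c u v \<sigma> A b"
    using overlap_loss_gderiv_A[OF assms(1,3), of u v b A] unfolding gderiv_def
    by (rule has_derivative_transform_within_open[OF _ N]) (simp add: phi_inv_eq)
  then show "grad_A (phi_inv c u v \<sigma> \<sigma>0) A b = overlap_grad_A c u v \<sigma> A b"
    unfolding grad_A_def by (rule some_gderiv_eq)
  have "GDERIV (\<lambda>b'. phi_inv c u v \<sigma> \<sigma>0 A b') b :> overlap_grad_b c u v \<sigma> A b"
    using overlap_loss_gderiv_b[OF assms(1,3), of u v A b] phi_inv_eq[OF N(2)] by simp
  then show "grad_b (phi_inv c u v \<sigma> \<sigma>0) A b = overlap_grad_b c u v \<sigma> A b"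
    unfolding grad_b_def by (rule some_gderiv_eq)
qed

lemma overlap_gradient_step_errors:
  fixes A Astar :: mat2 and b bstar :: pt
  assumes v: "\<And>i. i \<in> {1..c} \<Longrightarrow> v i = Astar *v u i + bstar"
    and "c > 0" "\<sigma> > 0" "mu > 0"
  defines "e \<equiv> \<lambda>i. exp (- ((norm ((A - Astar) *v u i + (b - bstar)))^2) / (4 * \<sigma>^2))"
  shows "A - (8 * pi * real c * \<sigma>^4 / mu) *\<^sub>R overlap_grad_A c u v \<sigma> A b - Astar
           = (A - Astar) - (1/mu) *\<^sub>R (\<Sum>i=1..c. e i *\<^sub>R outer ((A - Astar) *v u i + (b - bstar)) (u i))"
    and "b - (8 * pi * \<sigma>^4) *\<^sub>R overlap_grad_b c u v \<sigma> A b - bstar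
           = (b - bstar) - (1/real c) *\<^sub>R (\<Sum>i=1..c. e i *\<^sub>R ((A - Astar) *v u i + (b - bstar)))"
proof -
  have residual: "A *v u i + b - v i = (A - Astar) *v u i + (b - bstar)" if "i \<in> {1..c}" for i
    using v[OF that] by (simp add: matrix_vector_mult_diff_rdistrib algebra_simps)
  have "(8 * pi * real c * \<sigma>^4 / mu) *\<^sub>R overlap_grad_A c u v \<sigma> A b
      = ((8 * pi * real c * \<sigma>^4 / mu) * (1 / (8 * pi * \<sigma>^4 * real c))) *\<^sub>R
          (\<Sum>i=1..c. exp (- ((norm (A *v u i + b - v i))^2) / (4 * \<sigma>^2)) *\<^sub>R outer (A *v u i + b - v i) (u i))"
    by (simp add: overlap_grad_A_def)
  also have "(8 * pi * real c * \<sigma>^4 / mu) * (1 / (8 * pi * \<sigma>^4 * real c)) = 1 / mu"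
    using assms(2-4) by (simp add: field_simps)
  also have "(\<Sum>i=1..c. exp (- ((norm (A *v u i + b - v i))^2) / (4 * \<sigma>^2)) *\<^sub>R outer (A *v u i + b - v i) (u i))
      = (\<Sum>i=1..c. e i *\<^sub>R outer ((A - Astar) *v u i + (b - bstar)) (u i))"
    by (rule sum.cong) (simp_all add: e_def residual)
  finally show "A - (8 * pi * real c * \<sigma>^4 / mu) *\<^sub>R overlap_grad_A c u v \<sigma> A b - Astar
           = (A - Astar) - (1/mu) *\<^sub>R (\<Sum>i=1..c. e i *\<^sub>R outer ((A - Astar) *v u i + (b - bstar)) (u i))"
    by simp
  have "(8 * pi * \<sigma>^4) *\<^sub>R overlap_grad_b c u v \<sigma> A b
      = ((8 * pi * \<sigma>^4) * (1 / (8 * pi * \<sigma>^4 * real c))) *\<^sub>R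
          (\<Sum>i=1..c. exp (- ((norm (A *v u i + b - v i))^2) / (4 * \<sigma>^2)) *\<^sub>R (A *v u i + b - v i))"
    by (simp add: overlap_grad_b_def)
  also have "(8 * pi * \<sigma>^4) * (1 / (8 * pi * \<sigma>^4 * real c)) = 1 / real c"
    using assms(2-4) by (simp add: field_simps)
  also have "(\<Sum>i=1..c. exp (- ((norm (A *v u i + b - v i))^2) / (4 * \<sigma>^2)) *\<^sub>R (A *v u i + b - v i))
      = (\<Sum>i=1..c. e i *\<^sub>R ((A - Astar) *v u i + (b - bstar)))"
    by (rule sum.cong) (simp_all add: e_def residual)
  finally show "b - (8 * pi * \<sigma>^4) *\<^sub>R overlap_grad_b c u v \<sigma> A b - bstar
           = (b - bstar) - (1/real c) *\<^sub>R (\<Sum>i=1..c. e i *\<^sub>R ((A - Astar) *v u i + (b - bstar)))"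
    by simp
qed

section \<open>Spectral bounds for the Gram matrix\<close>

lemma quadratic_form_nonneg:
  fixes \<alpha> \<beta> \<gamma> x y :: real
  assumes "\<alpha> \<ge> 0" "\<gamma> \<ge> 0" "\<alpha> * \<gamma> = \<beta>^2"
  shows "0 \<le> \<alpha> * x^2 + 2 * \<beta> * x * y + \<gamma> * y^2"
proof (cases "\<alpha> = 0")
  case True
  then have "\<beta> = 0" using assms by simp
  then show ?thesis using True assms by simp
next
  case False
  then have ap: "\<alpha> > 0" using assms by simp
  have "\<alpha> * (\<alpha> * x^2 + 2 * \<beta> * x * y + \<gamma> * y^2) = (\<alpha> * x + \<beta> * y)^2"
    using assms(3) by (simp add: power2_eq_square algebra_simps)
  then have "0 \<le> \<alpha> * (\<alpha> * x^2 + 2 * \<beta> * x * y + \<gamma> * y^2)" by simp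
  then show ?thesis using ap by (simp add: zero_le_mult_iff)
qed

lemma det_zero_imp_kernel: assumes "det (A::mat2) = 0" shows "\<exists>x. x \<noteq> 0 \<and> A *v x = 0"
proof -
  have "\<not> invertible A" using assms invertible_det_nz by auto
  then have "\<not> (\<forall>x. A *v x = 0 \<longrightarrow> x = 0)"
    using invertible_left_inverse[of A] matrix_left_invertible_ker[of A] by auto
  then show ?thesis by auto
qed

locale sym_mat2 =
  fixes M :: mat2
  assumes sym: "M$2$1 = M$1$2"
begin

definition "half_gap = sqrt (((M$1$1 - M$2$2)/2)^2 + (M$1$2)^2)"
definition "eig_min = (M$1$1 + M$2$2)/2 - half_gap"
definition "eig_max = (M$1$1 + M$2$2)/2 + half_gap"

lemma half_gap_sq: "half_gap^2 = ((M$1$1 - M$2$2)/2)^2 + (M$1$2)^2" by (simp add: half_gap_def)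
lemma half_gap_ge: "\<bar>(M$1$1 - M$2$2)/2\<bar> \<le> half_gap"
proof -
  have "(\<bar>(M$1$1 - M$2$2)/2\<bar>)^2 = ((M$1$1 - M$2$2)/2)^2" by (rule power2_abs)
  then show ?thesis unfolding half_gap_def by (intro real_le_rsqrt) simp
qed

lemma char_poly: "(l - eig_min) * (l - eig_max) = (M$1$1 - l) * (M$2$2 - l) - (M$1$2)^2"
proof -
  have "(l - eig_min) * (l - eig_max) = (l - (M$1$1 + M$2$2)/2)^2 - half_gap^2"
    unfolding eig_min_def eig_max_def by (simp add: power2_eq_square field_simps)
  also have "\<dots> = (M$1$1 - l) * (M$2$2 - l) - (M$1$2)^2"
    unfolding half_gap_sq by (simp add: power2_eq_square field_simps)
  finally show ?thesis .
qed

lemma det_minus_scaleR_mat_1: "det (M - l *\<^sub>R mat 1) = (M$1$1 - l) * (M$2$2 - l) - (M$1$2)^2"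
  by (simp add: det_2 mat_1_mat2 sym power2_eq_square)

lemma eigvals_eq: "eigvals M = {eig_min, eig_max}"
proof
  show "eigvals M \<subseteq> {eig_min, eig_max}"
  proof
    fix l assume "l \<in> eigvals M"
    then obtain x where x: "x \<noteq> 0" "M *v x = l *\<^sub>R x" by (auto simp: eigvals_def)
    have "(M - l *\<^sub>R mat 1) *v x = 0" using x by (simp add: matrix_vector_mult_diff_rdistrib scaleR_matrix_vector_assoc[symmetric])
    then have "det (M - l *\<^sub>R mat 1) = 0"
      using x(1) invertible_det_nz[of "M - l *\<^sub>R mat 1"] invertible_left_inverse matrix_left_invertible_ker by metis
    then have "(l - eig_min) * (l - eig_max) = 0" unfolding char_poly det_minus_scaleR_mat_1[symmetric] .
    then show "l \<in> {eig_min, eig_max}" by auto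
  qed
  show "{eig_min, eig_max} \<subseteq> eigvals M"
  proof
    fix l assume l: "l \<in> {eig_min, eig_max}"
    then have "det (M - l *\<^sub>R mat 1) = 0" unfolding det_minus_scaleR_mat_1 char_poly[symmetric] by auto
    then obtain x where "x \<noteq> 0" "(M - l *\<^sub>R mat 1) *v x = 0" using det_zero_imp_kernel by blast
    then show "l \<in> eigvals M" unfolding eigvals_def
      by (auto simp: matrix_vector_mult_diff_rdistrib scaleR_matrix_vector_assoc[symmetric])
  qed
qed

lemma half_gap_nonneg: "half_gap \<ge> 0" unfolding half_gap_def by simp
lemma eig_min_le_eig_max: "eig_min \<le> eig_max" using half_gap_nonneg by (simp add: eig_min_def eig_max_def)

lemma Max_eigvals: "Max (eigvals M) = eig_max" using eig_min_le_eig_max by (simp add: eigvals_eq max_def)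
lemma Min_eigvals: "Min (eigvals M) = eig_min" using eig_min_le_eig_max by (simp add: eigvals_eq min_def)

lemma quadratic_form: "a \<bullet> (M *v a) = M$1$1 * (a$1)^2 + 2 * M$1$2 * (a$1) * (a$2) + M$2$2 * (a$2)^2"
  by (simp add: inner_vec2 matrix_vector_mult_vec2 sym power2_eq_square algebra_simps)

lemma Rayleigh_bounds: "eig_min * (a \<bullet> a) \<le> a \<bullet> (M *v a) \<and> a \<bullet> (M *v a) \<le> eig_max * (a \<bullet> a)"
proof
  have g: "- half_gap \<le> (M$1$1 - M$2$2)/2" "(M$1$1 - M$2$2)/2 \<le> half_gap" using half_gap_ge by (auto simp: abs_le_iff)
  have p1: "(M$1$1 - eig_min) * (M$2$2 - eig_min) = (M$1$2)^2" using char_poly[of eig_min] by simp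
  have "0 \<le> (M$1$1 - eig_min) * (a$1)^2 + 2 * M$1$2 * (a$1) * (a$2) + (M$2$2 - eig_min) * (a$2)^2"
  proof (rule quadratic_form_nonneg[OF _ _ p1])
    show "0 \<le> M$1$1 - eig_min" using g by (simp add: eig_min_def field_simps)
    show "0 \<le> M$2$2 - eig_min" using g by (simp add: eig_min_def field_simps)
  qed
  then show "eig_min * (a \<bullet> a) \<le> a \<bullet> (M *v a)" unfolding quadratic_form by (simp add: inner_vec2 power2_eq_square algebra_simps)
  have p2: "(eig_max - M$1$1) * (eig_max - M$2$2) = (- M$1$2)^2" using char_poly[of eig_max] by (simp add: algebra_simps power2_eq_square)
  have "0 \<le> (eig_max - M$1$1) * (a$1)^2 + 2 * (- M$1$2) * (a$1) * (a$2) + (eig_max - M$2$2) * (a$2)^2"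
  proof (rule quadratic_form_nonneg[OF _ _ p2])
    show "0 \<le> eig_max - M$1$1" using g by (simp add: eig_max_def field_simps)
    show "0 \<le> eig_max - M$2$2" using g by (simp add: eig_max_def field_simps)
  qed
  then show "a \<bullet> (M *v a) \<le> eig_max * (a \<bullet> a)" unfolding quadratic_form by (simp add: inner_vec2 power2_eq_square algebra_simps)
qed

lemma eig_min_eigenvector: "\<exists>x. x \<noteq> 0 \<and> M *v x = eig_min *\<^sub>R x"
proof -
  have "eig_min \<in> eigvals M" using eigvals_eq by simp
  then show ?thesis unfolding eigvals_def by simp
qed

end

lemma gram_symmetric: "gram c u $2$1 = gram c u $1$2"
  by (simp add: gram_def mult.commute)

lemma inner_gram: "a \<bullet> (gram c u *v a) = (\<Sum>i=1..c. (a \<bullet> u i)^2)"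
proof -
  have "(\<Sum>i=1..c. (a \<bullet> u i)^2) = (\<Sum>i=1..c. (a$1*a$1)*(u i$1*u i$1) + 2*(a$1*a$2)*(u i$1*u i$2) + (a$2*a$2)*(u i$2*u i$2))"
    by (rule sum.cong) (simp_all add: inner_vec2 power2_eq_square algebra_simps)
  also have "\<dots> = (a$1*a$1)*(\<Sum>i=1..c. u i$1*u i$1) + 2*(a$1*a$2)*(\<Sum>i=1..c. u i$1*u i$2) + (a$2*a$2)*(\<Sum>i=1..c. u i$2*u i$2)"
    by (simp add: sum.distrib sum_distrib_left)
  also have "\<dots> = a \<bullet> (gram c u *v a)"
  proof -
    have e: "gram c u $1$1 = (\<Sum>i=1..c. u i$1*u i$1)" "gram c u $1$2 = (\<Sum>i=1..c. u i$1*u i$2)"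
      "gram c u $2$1 = (\<Sum>i=1..c. u i$1*u i$2)" "gram c u $2$2 = (\<Sum>i=1..c. u i$2*u i$2)"
      by (simp_all add: gram_def mult.commute)
    have "a \<bullet> (gram c u *v a) = a$1 * (gram c u $1$1 * a$1 + gram c u $1$2 * a$2) + a$2 * (gram c u $2$1 * a$1 + gram c u $2$2 * a$2)"
      by (simp add: inner_vec2 matrix_vector_mult_vec2)
    then show ?thesis unfolding e by (simp add: algebra_simps)
  qed
  finally show ?thesis by simp
qed

lemma rank2_sum_inner_sq_pos:
  fixes u :: "nat \<Rightarrow> pt" and c :: nat and a :: pt
  assumes r: "dim (span (u ` {1..c})) = 2" and a: "a \<noteq> 0"
  shows "(\<Sum>i=1..c. (a \<bullet> u i)^2) > 0"
proof (rule ccontr)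
  assume ng: "\<not> ?thesis"
  have nn: "0 \<le> (\<Sum>i=1..c. (a \<bullet> u i)^2)" by (intro sum_nonneg) simp
  have "(\<Sum>i=1..c. (a \<bullet> u i)^2) = 0" using nn ng by simp
  then have z: "\<forall>i\<in>{1..c}. a \<bullet> u i = 0" by (subst (asm) sum_nonneg_eq_0_iff) auto
  have "u ` {1..c} \<subseteq> {x. a \<bullet> x = 0}" using z by auto
  then have "dim (u ` {1..c}) \<le> dim {x. a \<bullet> x = 0}" by (rule dim_subset)
  also have "\<dots> = 1" using dim_hyperplane[OF a] by simp
  finally have "dim (u ` {1..c}) \<le> 1" .
  then show False using r by (simp add: dim_span)
qed

lemma singular_value_bounds:
  assumes rank2: "dim (span (u ` {1..c})) = 2"
  shows "0 < s_min c u ^ 2" and "s_min c u ^ 2 \<le> s_max c u ^ 2"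
    and "\<And>a. s_min c u ^ 2 * (a \<bullet> a) \<le> (\<Sum>i=1..c. (a \<bullet> u i)^2)"
    and "\<And>a. (\<Sum>i=1..c. (a \<bullet> u i)^2) \<le> s_max c u ^ 2 * (a \<bullet> a)"
proof -
  interpret G: sym_mat2 "gram c u" by unfold_locales (rule gram_symmetric)
  have min_pos: "G.eig_min > 0"
  proof -
    obtain x where x: "x \<noteq> 0" "gram c u *v x = G.eig_min *\<^sub>R x" using G.eig_min_eigenvector by blast
    have "0 < (\<Sum>i=1..c. (x \<bullet> u i)^2)" by (rule rank2_sum_inner_sq_pos[OF rank2 x(1)])
    also have "\<dots> = G.eig_min * (x \<bullet> x)" unfolding inner_gram[symmetric] x(2) by simp
    finally show ?thesis using inner_ge_zero[of x] by (auto simp: zero_less_mult_iff)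
  qed
  have min: "s_min c u ^ 2 = G.eig_min" and max: "s_max c u ^ 2 = G.eig_max"
    using min_pos G.eig_min_le_eig_max by (simp_all add: s_min_def s_max_def G.Min_eigvals G.Max_eigvals)
  show "0 < s_min c u ^ 2" "s_min c u ^ 2 \<le> s_max c u ^ 2"
    using min_pos G.eig_min_le_eig_max by (simp_all add: min max)
  show "s_min c u ^ 2 * (a \<bullet> a) \<le> (\<Sum>i=1..c. (a \<bullet> u i)^2)"
    and "(\<Sum>i=1..c. (a \<bullet> u i)^2) \<le> s_max c u ^ 2 * (a \<bullet> a)" for a
    using G.Rayleigh_bounds[of a] by (simp_all add: min max inner_gram)
qed

lemma s_min_sq_le_card_Max_norm_sq:
  assumes "c > 0" and "dim (span (u ` {1..c})) = 2"
  shows "s_min c u ^ 2 \<le> real c * Max ((\<lambda>i. (norm (u i))^2) ` {1..c})"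
proof -
  let ?a = "axis 1 1 :: pt"
  have "s_min c u ^ 2 * (?a \<bullet> ?a) \<le> (\<Sum>i=1..c. (?a \<bullet> u i)^2)"
    by (rule singular_value_bounds(3)[OF assms(2)])
  also have "\<dots> \<le> (\<Sum>i=1..c. Max ((\<lambda>i. (norm (u i))^2) ` {1..c}))"
  proof (rule sum_mono)
    fix i assume "i \<in> {1..c}"
    then have "(norm (u i))^2 \<le> Max ((\<lambda>i. (norm (u i))^2) ` {1..c})" by (intro Max_ge) auto
    moreover have "(?a \<bullet> u i)^2 \<le> (norm (u i))^2" by (simp add: inner_vec2 axis_def norm_vec2_sq)
    ultimately show "(?a \<bullet> u i)^2 \<le> Max ((\<lambda>i. (norm (u i))^2) ` {1..c})" by linarith
  qed
  finally show ?thesis by simp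
qed

section \<open>Contraction of one gradient step\<close>

lemma matrix_vector_mult_inner_le: "(D *v x) \<bullet> (D *v x) \<le> ((D::mat2) \<bullet> D) * (x \<bullet> x)"
proof -
  have "(D *v x) \<bullet> (D *v x) = (D$1 \<bullet> x)^2 + (D$2 \<bullet> x)^2"
    by (simp add: inner_vec2 matrix_vector_mult_row power2_eq_square)
  also have "\<dots> \<le> (D$1 \<bullet> D$1) * (x \<bullet> x) + (D$2 \<bullet> D$2) * (x \<bullet> x)"
    using Cauchy_Schwarz_ineq[of "D$1" x] Cauchy_Schwarz_ineq[of "D$2" x] by linarith
  also have "\<dots> = (D \<bullet> D) * (x \<bullet> x)" by (simp add: inner_mat2 algebra_simps)
  finally show ?thesis .
qed

lemma sum_matrix_vector_sq_bounds:
  assumes "\<And>a. lam * (a \<bullet> a) \<le> (\<Sum>i\<in>I. (a \<bullet> u i)^2)" and "\<And>a. (\<Sum>i\<in>I. (a \<bullet> u i)^2) \<le> mu * (a \<bullet> a)"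
  shows "lam * (D \<bullet> D) \<le> (\<Sum>i\<in>I. (D *v u i) \<bullet> (D *v u i))"
    and "(\<Sum>i\<in>I. (D *v u i) \<bullet> (D *v u i)) \<le> mu * ((D::mat2) \<bullet> D)"
proof -
  have rows: "(\<Sum>i\<in>I. (D *v u i) \<bullet> (D *v u i)) = (\<Sum>i\<in>I. (D$1 \<bullet> u i)^2) + (\<Sum>i\<in>I. (D$2 \<bullet> u i)^2)"
    by (simp add: inner_vec2 matrix_vector_mult_row sum.distrib power2_eq_square)
  show "lam * (D \<bullet> D) \<le> (\<Sum>i\<in>I. (D *v u i) \<bullet> (D *v u i))"
    unfolding rows inner_mat2 using assms(1)[of "D$1"] assms(1)[of "D$2"] by (simp add: algebra_simps)
  show "(\<Sum>i\<in>I. (D *v u i) \<bullet> (D *v u i)) \<le> mu * (D \<bullet> D)"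
    unfolding rows inner_mat2 using assms(2)[of "D$1"] assms(2)[of "D$2"] by (simp add: algebra_simps)
qed

lemma sum_affine_residual_sq:
  fixes D :: mat2 and d :: pt
  assumes "(\<Sum>i\<in>I. u i) = 0"
  shows "(\<Sum>i\<in>I. (D *v u i + d) \<bullet> (D *v u i + d)) = (\<Sum>i\<in>I. (D *v u i) \<bullet> (D *v u i)) + real (card I) * (d \<bullet> d)"
proof -
  have "(\<Sum>i\<in>I. D *v u i) = D *v (\<Sum>i\<in>I. u i)"
    by (rule linear_sum[OF matrix_vector_mul_linear, symmetric])
  then have centered: "(\<Sum>i\<in>I. D *v u i) = 0" using assms by simp
  have "(\<Sum>i\<in>I. (D *v u i + d) \<bullet> (D *v u i + d)) = (\<Sum>i\<in>I. (D *v u i) \<bullet> (D *v u i) + 2 * ((D *v u i) \<bullet> d) + d \<bullet> d)"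
    by (rule sum.cong) (simp_all add: inner_add inner_commute algebra_simps)
  also have "\<dots> = (\<Sum>i\<in>I. (D *v u i) \<bullet> (D *v u i)) + 2 * ((\<Sum>i\<in>I. D *v u i) \<bullet> d) + (\<Sum>i\<in>I. d \<bullet> d)"
    by (simp add: sum.distrib inner_sum_left sum_distrib_left)
  finally show ?thesis by (simp add: centered)
qed

lemma psd_form_Cauchy_Schwarz:
  fixes T :: "'z::real_vector \<Rightarrow> 'z \<Rightarrow> real"
  assumes quad: "\<And>x y t. T (x + t *\<^sub>R y) (x + t *\<^sub>R y) = T x x + 2 * t * T x y + t^2 * T y y"
    and pos: "\<And>x. T x x \<ge> 0"
  shows "(T x y)^2 \<le> T x x * T y y"
proof (cases "T y y = 0")
  case True
  have "T x y = 0"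
  proof (rule ccontr)
    assume ne: "T x y \<noteq> 0"
    define t where "t = - (T x x + 1) / (2 * T x y)"
    have "0 \<le> T (x + t *\<^sub>R y) (x + t *\<^sub>R y)" by (rule pos)
    also have "\<dots> = T x x + 2 * t * T x y" using quad True by simp
    also have "\<dots> = -1" using ne by (simp add: t_def field_simps)
    finally show False by simp
  qed
  then show ?thesis using True by simp
next
  case False
  then have p: "T y y > 0" using pos[of y] by simp
  define t where "t = - T x y / T y y"
  have "0 \<le> T (x + t *\<^sub>R y) (x + t *\<^sub>R y)" by (rule pos)
  also have "\<dots> = T x x + 2 * t * T x y + t^2 * T y y" by (rule quad)
  also have "\<dots> = T x x - (T x y)^2 / T y y" using p by (simp add: t_def field_simps power2_eq_square)
  finally show ?thesis using p by (simp add: field_simps)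
qed

definition error_energy :: "real \<Rightarrow> mat2 \<Rightarrow> pt \<Rightarrow> real" where
  "error_energy w D d = w * (D \<bullet> D) + d \<bullet> d"

lemma error_energy_nonneg: "w \<ge> 0 \<Longrightarrow> error_energy w D d \<ge> 0"
  by (simp add: error_energy_def)

lemma error_energy_scaled: "c > 0 \<Longrightarrow> real c * error_energy (mu / c) D d = mu * (D \<bullet> D) + real c * (d \<bullet> d)"
  by (simp add: error_energy_def algebra_simps)

lemma weighted_residual_bounds:
  fixes D :: mat2 and d :: pt and e :: "nat \<Rightarrow> real"
  assumes c: "c > 0" and centered: "(\<Sum>i=1..c. u i) = 0"
    and lam: "\<And>a. lam * (a \<bullet> a) \<le> (\<Sum>i=1..c. (a \<bullet> u i)^2)"
    and mu: "\<And>a. (\<Sum>i=1..c. (a \<bullet> u i)^2) \<le> mu * (a \<bullet> a)"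
    and lam_mu: "0 < lam" "lam \<le> mu"
    and e: "\<And>i. i \<in> {1..c} \<Longrightarrow> 1/2 \<le> e i \<and> e i \<le> 1"
  defines "S \<equiv> 1/c * (\<Sum>i=1..c. e i * ((D *v u i + d) \<bullet> (D *v u i + d)))"
  shows "lam / (2*mu) * error_energy (mu/c) D d \<le> S" and "S \<le> error_energy (mu/c) D d"
proof -
  have cp: "real c > 0" using c by simp
  have e0: "\<And>i. i \<in> {1..c} \<Longrightarrow> 0 \<le> e i" using e by fastforce
  have residuals: "(\<Sum>i=1..c. (D *v u i + d) \<bullet> (D *v u i + d)) = (\<Sum>i=1..c. (D *v u i) \<bullet> (D *v u i)) + real c * (d \<bullet> d)"
    using sum_affine_residual_sq[OF centered] by simp
  note D_bounds = sum_matrix_vector_sq_bounds[OF lam mu, of D]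
  have "S \<le> 1/c * (\<Sum>i=1..c. (D *v u i + d) \<bullet> (D *v u i + d))"
    unfolding S_def using cp e e0 by (intro mult_left_mono sum_mono) (auto intro!: mult_left_le_one_le)
  also have "\<dots> \<le> error_energy (mu/c) D d"
    unfolding residuals error_energy_def using D_bounds(2) cp by (simp add: field_simps)
  finally show "S \<le> error_energy (mu/c) D d" .
  have "lam / (2*mu) * error_energy (mu/c) D d = lam/(2*c) * (D \<bullet> D) + lam/(2*mu) * (d \<bullet> d)"
    unfolding error_energy_def using lam_mu cp by (simp add: field_simps)
  also have "\<dots> \<le> lam/(2*c) * (D \<bullet> D) + 1/2 * (d \<bullet> d)"
    using lam_mu by (intro add_left_mono mult_right_mono) (auto simp: field_simps)
  also have "\<dots> \<le> 1/c * ((1/2) * (\<Sum>i=1..c. (D *v u i + d) \<bullet> (D *v u i + d)))"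
    unfolding residuals using D_bounds(1) cp by (simp add: field_simps)
  also have "\<dots> \<le> S"
    unfolding S_def sum_distrib_left using cp e e0 by (intro mult_left_mono sum_mono mult_right_mono) auto
  finally show "lam / (2*mu) * error_energy (mu/c) D d \<le> S" .
qed

text \<open>With \<open>IP\<close> the inner product of \<open>error_energy\<close> and \<open>T\<close> the form of \<open>1 - P\<close>, one has
  \<open>IP z' w = T z w\<close>; Cauchy--Schwarz for \<open>T\<close> and \<open>T \<le> (1 - m) IP\<close> then give the rate \<open>(1 - m)\<^sup>2\<close>.\<close>
lemma weighted_step_contraction:
  fixes D :: mat2 and d :: pt and e :: "nat \<Rightarrow> real"
  assumes c: "c > 0" and centered: "(\<Sum>i=1..c. u i) = 0"
    and lam: "\<And>a. lam * (a \<bullet> a) \<le> (\<Sum>i=1..c. (a \<bullet> u i)^2)"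
    and mu: "\<And>a. (\<Sum>i=1..c. (a \<bullet> u i)^2) \<le> mu * (a \<bullet> a)"
    and lam_mu: "0 < lam" "lam \<le> mu"
    and e: "\<And>i. i \<in> {1..c} \<Longrightarrow> 1/2 \<le> e i \<and> e i \<le> 1"
  defines "D' \<equiv> D - (1/mu) *\<^sub>R (\<Sum>i=1..c. e i *\<^sub>R outer (D *v u i + d) (u i))"
    and "d' \<equiv> d - (1/real c) *\<^sub>R (\<Sum>i=1..c. e i *\<^sub>R (D *v u i + d))"
  shows "error_energy (mu/c) D' d' \<le> (1 - lam/(2*mu))^2 * error_energy (mu/c) D d"
proof -
  define R where "R i z = fst z *v u i + snd z" for i and z :: "mat2 \<times> pt"
  define IP where "IP z w = mu/c * (fst z \<bullet> fst w) + snd z \<bullet> snd w" for z w :: "mat2 \<times> pt"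
  define S where "S z w = 1/c * (\<Sum>i=1..c. e i * (R i z \<bullet> R i w))" for z w
  define T where "T z w = IP z w - S z w" for z w
  define m where "m = lam / (2*mu)"
  have mup: "mu > 0" using lam_mu by simp
  have cp: "real c > 0" using c by simp
  have IP_energy: "IP z z = error_energy (mu/c) (fst z) (snd z)" for z
    by (simp add: IP_def error_energy_def)
  have S_bounds: "m * IP z z \<le> S z z" "S z z \<le> IP z z" for z
    using weighted_residual_bounds[OF c centered lam mu lam_mu e, where D="fst z" and d="snd z"]
    unfolding IP_energy m_def S_def R_def by simp_all
  have R_lin: "R i (x + t *\<^sub>R y) = R i x + t *\<^sub>R R i y" for i x y t
    by (simp add: R_def matrix_vector_mult_add_rdistrib scaleR_matrix_vector_assoc algebra_simps)
  have T_quad: "T (x + t *\<^sub>R y) (x + t *\<^sub>R y) = T x x + 2 * t * T x y + t^2 * T y y" for x y t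
  proof -
    have "S (x + t *\<^sub>R y) (x + t *\<^sub>R y) = S x x + 2 * t * S x y + t^2 * S y y"
      unfolding S_def R_lin
      by (simp add: inner_add inner_commute sum.distrib sum_distrib_left algebra_simps power2_eq_square)
    moreover have "IP (x + t *\<^sub>R y) (x + t *\<^sub>R y) = IP x x + 2 * t * IP x y + t^2 * IP y y"
      unfolding IP_def by (simp add: inner_add inner_commute algebra_simps power2_eq_square)
    ultimately show ?thesis unfolding T_def by (simp add: algebra_simps)
  qed
  have T_pos: "T z z \<ge> 0" and T_le: "T z z \<le> (1 - m) * IP z z" for z
    using S_bounds[of z] by (simp_all add: T_def algebra_simps)
  let ?z = "(D, d)" and ?z' = "(D', d')"
  have adjoint: "IP ?z' w = T ?z w" for w
  proof -
    have outer_inner: "outer r (u i) \<bullet> W = r \<bullet> (W *v u i)" for r W i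
      by (simp add: inner_matrix_vector_outer inner_commute)
    have D': "D' \<bullet> fst w = D \<bullet> fst w - (1/mu) * (\<Sum>i=1..c. e i * ((D *v u i + d) \<bullet> (fst w *v u i)))"
      and d': "d' \<bullet> snd w = d \<bullet> snd w - (1/c) * (\<Sum>i=1..c. e i * ((D *v u i + d) \<bullet> snd w))"
      by (simp_all add: D'_def d'_def inner_diff_left inner_sum_left outer_inner)
    have "IP ?z' w = mu/c * (D \<bullet> fst w) + d \<bullet> snd w - 1/c * (\<Sum>i=1..c. e i * ((D *v u i + d) \<bullet> (fst w *v u i)) + e i * ((D *v u i + d) \<bullet> snd w))"
      unfolding IP_def fst_conv snd_conv D' d' using mup cp by (simp add: sum.distrib field_simps)
    also have "\<dots> = T ?z w"
      unfolding T_def IP_def S_def R_def by (simp add: inner_add_right algebra_simps)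
    finally show ?thesis .
  qed
  have IP_nonneg: "IP z z \<ge> 0" for z
    unfolding IP_energy using mup cp by (simp add: error_energy_nonneg)
  have "(IP ?z' ?z')^2 = (T ?z ?z')^2" using adjoint by simp
  also have "\<dots> \<le> T ?z ?z * T ?z' ?z'" by (rule psd_form_Cauchy_Schwarz[OF T_quad T_pos])
  also have "\<dots> \<le> ((1 - m) * IP ?z ?z) * ((1 - m) * IP ?z' ?z')"
    by (intro mult_mono T_le T_pos order_trans[OF T_pos T_le])
  finally have "IP ?z' ?z' * IP ?z' ?z' \<le> ((1 - m)^2 * IP ?z ?z) * IP ?z' ?z'"
    by (simp add: power2_eq_square algebra_simps)
  then have "IP ?z' ?z' \<le> (1 - m)^2 * IP ?z ?z"
    using IP_nonneg[of ?z] IP_nonneg[of ?z'] by (cases "IP ?z' ?z' = 0") (auto simp: mult_le_cancel_right)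
  then show ?thesis unfolding IP_energy m_def by simp
qed

lemma norm_affine_residual_sq_le:
  fixes D :: mat2 and d x :: pt
  assumes "0 < lam" "lam \<le> mu" "lam \<le> real c * Mx" "(norm x)^2 \<le> Mx"
  shows "(norm (D *v x + d))^2 \<le> 2 * Mx / lam * (mu * (D \<bullet> D) + real c * (d \<bullet> d))"
proof -
  have "(norm (D *v x + d))^2 \<le> 2 * ((D *v x) \<bullet> (D *v x) + d \<bullet> d)"
    using inner_ge_zero[of "D *v x - d"] by (simp add: power2_norm_eq_inner inner_add inner_diff inner_commute)
  also have "\<dots> \<le> 2 * ((D \<bullet> D) * Mx + d \<bullet> d)"
    using matrix_vector_mult_inner_le[of D x] mult_left_mono[OF assms(4), of "D \<bullet> D"]
    by (simp add: power2_norm_eq_inner)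
  also have "\<dots> \<le> 2 * ((D \<bullet> D) * (Mx * mu / lam) + (real c * Mx / lam) * (d \<bullet> d))"
  proof -
    have "Mx \<ge> 0" using assms(4) by (meson order_trans zero_le_power2)
    then have "Mx \<le> Mx * mu / lam" "1 \<le> real c * Mx / lam"
      using assms(1-3) by (simp_all add: field_simps mult_left_mono)
    then have "(D \<bullet> D) * Mx \<le> (D \<bullet> D) * (Mx * mu / lam)" "1 * (d \<bullet> d) \<le> (real c * Mx / lam) * (d \<bullet> d)"
      by (intro mult_left_mono mult_right_mono; simp)+
    then show ?thesis by simp
  qed
  also have "\<dots> = 2 * Mx / lam * (mu * (D \<bullet> D) + real c * (d \<bullet> d))"
    using assms(1) by (simp add: field_simps)
  finally show ?thesis .
qed

lemma exp_ge_half: "(t::real) \<le> 1 \<Longrightarrow> 1/2 \<le> exp (- t / 4)"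
  using exp_ge_add_one_self[of "- t / 4"] by linarith

lemma phi_inv_gradient_step_contraction:
  fixes A Astar :: mat2 and b bstar :: pt
  assumes c: "c > 0" and centered: "(\<Sum>i=1..c. u i) = 0" and rank2: "dim (span (u ` {1..c})) = 2"
    and v: "\<And>i. i \<in> {1..c} \<Longrightarrow> v i = Astar *v u i + bstar"
    and \<sigma>: "\<sigma> > 0" "\<sigma>0 \<ge> 0"
    and N: "open N" "A \<in> N" "\<forall>A'\<in>N. invertible A' \<and> psd (\<sigma>^2 *\<^sub>R mat 1 - \<sigma>0^2 *\<^sub>R (A' ** transpose A'))"
    and \<sigma>_large: "2 * Max ((\<lambda>i. (norm (u i))^2) ` {1..c}) / s_min c u ^ 2 * (real c * E) \<le> \<sigma>^2"
    and energy_le: "error_energy (s_max c u ^ 2 / c) (A - Astar) (b - bstar) \<le> E"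
  defines "A' \<equiv> A - (8 * pi * real c * \<sigma>^4 / s_max c u ^ 2) *\<^sub>R grad_A (phi_inv c u v \<sigma> \<sigma>0) A b"
    and "b' \<equiv> b - (8 * pi * \<sigma>^4) *\<^sub>R grad_b (phi_inv c u v \<sigma> \<sigma>0) A b"
  shows "error_energy (s_max c u ^ 2 / c) (A' - Astar) (b' - bstar)
         \<le> (1 - s_min c u ^ 2 / (2 * s_max c u ^ 2))^2 * error_energy (s_max c u ^ 2 / c) (A - Astar) (b - bstar)"
proof -
  note sv = singular_value_bounds[OF rank2]
  have mu_pos: "s_max c u ^ 2 > 0" using sv(1,2) by linarith
  have "0 < real c * Max ((\<lambda>i. (norm (u i))^2) ` {1..c})"
    using s_min_sq_le_card_Max_norm_sq[OF c rank2] sv(1) by linarith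
  then have "0 \<le> 2 * Max ((\<lambda>i. (norm (u i))^2) ` {1..c}) / s_min c u ^ 2 * real c"
    by (simp add: zero_less_mult_iff)
  from order_trans[OF mult_left_mono[OF energy_le this] \<sigma>_large[folded mult.assoc]]
  have small: "2 * Max ((\<lambda>i. (norm (u i))^2) ` {1..c}) / s_min c u ^ 2
                  * (real c * error_energy (s_max c u ^ 2 / c) (A - Astar) (b - bstar)) \<le> \<sigma>^2"
    by (simp add: mult.assoc)
  define e where "e i = exp (- ((norm ((A - Astar) *v u i + (b - bstar)))^2) / (4 * \<sigma>^2))" for i
  have e_bounds: "1/2 \<le> e i \<and> e i \<le> 1" if "i \<in> {1..c}" for i
  proof
    show "e i \<le> 1" using \<sigma> by (simp add: e_def)
    have "(norm (u i))^2 \<le> Max ((\<lambda>i. (norm (u i))^2) ` {1..c})" using that by (intro Max_ge) auto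
    from order_trans[OF norm_affine_residual_sq_le[OF sv(1,2) s_min_sq_le_card_Max_norm_sq[OF c rank2] this]
        small[unfolded error_energy_scaled[OF c]]]
    have "(norm ((A - Astar) *v u i + (b - bstar)))^2 / \<sigma>^2 \<le> 1"
      using \<sigma>(1) by simp
    moreover have "e i = exp (- ((norm ((A - Astar) *v u i + (b - bstar)))^2 / \<sigma>^2) / 4)"
      by (simp add: e_def field_simps)
    ultimately show "1/2 \<le> e i" by (metis exp_ge_half)
  qed
  have A'_error: "A' - Astar = (A - Astar) - (1 / s_max c u ^ 2) *\<^sub>R
          (\<Sum>i=1..c. e i *\<^sub>R outer ((A - Astar) *v u i + (b - bstar)) (u i))"
    and b'_error: "b' - bstar = (b - bstar) - (1 / real c) *\<^sub>R (\<Sum>i=1..c. e i *\<^sub>R ((A - Astar) *v u i + (b - bstar)))"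
    using overlap_gradient_step_errors[OF v c \<sigma>(1) mu_pos, where A=A and b=b]
    unfolding A'_def b'_def grad_phi_inv_eq_overlap_grad[OF \<sigma> c N] e_def by simp_all
  show ?thesis
    unfolding A'_error b'_error by (rule weighted_step_contraction[OF c centered sv(3,4) sv(1,2) e_bounds])
qed

lemma power_decay_of_step_bound:
  fixes V :: "nat \<Rightarrow> real"
  assumes "0 \<le> \<rho>" "\<rho> \<le> 1" "0 \<le> V 0"
    and step: "\<And>k. V k \<le> V 0 \<Longrightarrow> V (Suc k) \<le> \<rho>^2 * V k"
  shows "V k \<le> \<rho>^(2*k) * V 0"
proof (induction k)
  case (Suc k)
  have "V k \<le> V 0"
    using Suc.IH assms(1-3) by (meson mult_left_le_one_le order_trans power_le_one zero_le_power)
  then have "V (Suc k) \<le> \<rho>^2 * V k" by (rule step)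
  also have "\<dots> \<le> \<rho>^2 * (\<rho>^(2*k) * V 0)"
    using Suc.IH by (simp add: mult_left_mono)
  finally show ?case by (simp add: power_add power2_eq_square mult.assoc)
qed simp

theorem theorem1:
  fixes c :: nat and u v :: "nat \<Rightarrow> pt" and Astar :: mat2 and bstar :: pt
    and \<sigma> \<sigma>0 tA tb \<kappa> :: real and A :: "nat \<Rightarrow> mat2" and b :: "nat \<Rightarrow> pt"
  assumes c2: "c \<ge> 2"
    and Astar_inv: "invertible Astar"
    and v_def: "\<And>i. i \<in> {1..c} \<Longrightarrow> v i = Astar *v u i + bstar"
    and sigma_pos: "\<sigma> > 0" and sigma0_nonneg: "\<sigma>0 \<ge> 0"
    and centered: "(\<Sum>i=1..c. u i) = 0"
    and rank2: "dim (span (u ` {1..c})) = 2"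
    and kappa_def: "\<kappa> = s_max c u ^ 2 / s_min c u ^ 2"
    and sigma_large: "\<sigma>^2 \<ge> 2 * Max ((\<lambda>i. (norm (u i))^2) ` {1..c}) / s_min c u ^ 2
                         * (s_max c u ^ 2 * frob_norm (Astar - mat 1) ^ 2 + real c * (norm bstar)^2)"
    and tA_def: "tA = 8 * pi * real c * \<sigma>^4 / s_max c u ^ 2"
    and tb_def: "tb = 8 * pi * \<sigma>^4"
    and A0: "A 0 = mat 1" and b0: "b 0 = 0"
    and A_step: "\<And>k. A (Suc k) = A k - tA *\<^sub>R grad_A (phi_inv c u v \<sigma> \<sigma>0) (A k) (b k)"
    and b_step: "\<And>k. b (Suc k) = b k - tb *\<^sub>R grad_b (phi_inv c u v \<sigma> \<sigma>0) (A k) (b k)"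
    and well_defined: "\<And>k. \<exists>N. open N \<and> A k \<in> N \<and>
                 (\<forall>A'\<in>N. invertible A' \<and> psd (\<sigma>^2 *\<^sub>R mat 1 - \<sigma>0^2 *\<^sub>R (A' ** transpose A')))"
  shows "8 * pi * \<sigma>^4 / tA * frob_norm (A k - Astar)^2 + (norm (b k - bstar))^2
           \<le> (1 - 1 / (2 * \<kappa>)) ^ (2 * k)
              * (8 * pi * \<sigma>^4 / tA * frob_norm (mat 1 - Astar)^2 + (norm bstar)^2)"
proof -
  let ?lam = "s_min c u ^ 2" and ?mu = "s_max c u ^ 2"
  define V where "V k = error_energy (?mu / c) (A k - Astar) (b k - bstar)" for k
  define \<rho> where "\<rho> = 1 - ?lam / (2 * ?mu)"
  have c: "c > 0" using c2 by simp
  note sv = singular_value_bounds[OF rank2]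
  have mu_pos: "?mu > 0" using sv(1,2) by linarith
  have "?lam \<le> 2 * ?mu" using sv(2) mu_pos by linarith
  then have \<rho>: "0 \<le> \<rho>" "\<rho> \<le> 1" using mu_pos by (simp_all add: \<rho>_def field_simps)
  have V0: "real c * V 0 = ?mu * frob_norm (Astar - mat 1) ^ 2 + real c * (norm bstar)^2"
    unfolding V_def error_energy_scaled[OF c] A0 b0 frob_norm_sq power2_norm_eq_inner
    by (simp add: inner_diff inner_commute algebra_simps)
  have step: "V (Suc k) \<le> \<rho>^2 * V k" if "V k \<le> V 0" for k
  proof -
    obtain N where N: "open N" "A k \<in> N"
      "\<forall>A'\<in>N. invertible A' \<and> psd (\<sigma>^2 *\<^sub>R mat 1 - \<sigma>0^2 *\<^sub>R (A' ** transpose A'))"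
      using well_defined by blast
    show ?thesis
      using phi_inv_gradient_step_contraction[OF c centered rank2 v_def sigma_pos sigma0_nonneg N
          sigma_large[folded V0] that[unfolded V_def[of k]]]
      unfolding V_def \<rho>_def A_step b_step tA_def tb_def .
  qed
  have "V k \<le> \<rho>^(2*k) * V 0"
    using \<rho> sv(1,2) step by (intro power_decay_of_step_bound) (simp_all add: V_def error_energy_nonneg)
  moreover have "8 * pi * \<sigma>^4 / tA = ?mu / c" "1 - 1 / (2 * \<kappa>) = \<rho>"
    using sv(1,2) c sigma_pos by (simp_all add: tA_def kappa_def \<rho>_def field_simps)
  ultimately show ?thesis
    by (simp add: V_def error_energy_def frob_norm_sq power2_norm_eq_inner A0 b0)
qed

end
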